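(* For every $n\in\mathbb N_0$ and $d\in\mathbb Z$, letting $T_0\in\{0,\dots,M\}$ with $T_0\equiv n\pmod{M+1}$, $$N(n,d;q)=q^{Mn}\sum_{s\in S(T_0,M+1,d)}\mu_{(M+1)n}(s).$$
   Context: Let $q$ be a prime power and $M\ge1$. A multisequence prefix is $a=(a_{k,m})_{1\le k\le n,\,1\le m\le M}\in(\mathbb F_q^M)^n$. Its linear complexity $L_a(n)$ is the least $L\ge0$ such that there exist $c_1,\dots,c_L\in\mathbb F_q$ with $a_{k,m}=\sum_{i=1}^L c_i a_{k-i,m}$ for all $L<k\le n$ and all $1\le m\le M$ (a single linear feedback shift register of length $L$ generating all $M$ sequences); $L_a(0)=0$. The linear complexity deviation is $d_a(n)=L_a(n)-\lceil nM/(M+1)\rceil$, and $N(n,d;q)$ is the number of $a\in(\mathbb F_q^M)^n$ with $d_a(n)=d$. The BDM: the augmented state set is $\overline S=\{(b_1,\dots,b_M,d;T,t): b_m,d,T\in\mathbb Z,\ 1\le t\le M+1,\ d+T+\sum_m b_m=0\}$, the state set is $S=\{s\in\overline S:0\le T\le M\}$, $S(T_0,t_0,d_0)=\{s\in S:T=T_0,t=t_0,d=d_0\}$, initial state $s_0=(0,\dots,0,0;0,M+1)$. Transitions from $s=(b_1,\dots,b_M,d;T,t)$: if $t\le M$ and $b_t>d$, with probability $(q-1)/q$ to $(b_1,\dots,b_{t-1},d,b_{t+1},\dots,b_M,b_t;T,t+1)$ and with probability $1/q$ to $(b_1,\dots,b_M,d;T,t+1)$; if $t\le M$ and $b_t\le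 d$, with probability 1 to $(b_1,\dots,b_M,d;T,t+1)$; if $t=M+1,T<M$, with probability 1 to $(b_1,\dots,b_M,d-1;T+1,1)$; if $t=M+1,T=M$, with probability 1 to $(b_1+1,\dots,b_M+1,d;0,1)$. Let $\mu_0$ be the point mass at $s_0$ and $\mu_{\tau+1}(s')=\sum_s\mu_\tau(s)p(s,s')$. *)

theory Defs
  imports "HOL-Probability.Probability"
begin

text \<open>Multisequence prefixes of length n over the field 'a with M sequences:
  functions a with a k m the k-th term of the m-th sequence (1 \<le> k \<le> n, 1 \<le> m \<le> M),
  extended by 0 outside this index range.\<close>
definition prefixes :: "nat \<Rightarrow> nat \<Rightarrow> (nat \<Rightarrow> nat \<Rightarrow> 'a::zero) set" where
  "prefixes M n = {a. \<forall>k m. \<not> (1 \<le> k \<and> k \<le> n \<and> 1 \<le> m \<and> m \<le> M) \<longrightarrow> a k m = 0}"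

definition lin_compl :: "nat \<Rightarrow> (nat \<Rightarrow> nat \<Rightarrow> 'a::field) \<Rightarrow> nat \<Rightarrow> nat" where
  "lin_compl M a n = (LEAST L. \<exists>c :: nat \<Rightarrow> 'a. \<forall>k m. L < k \<and> k \<le> n \<and> 1 \<le> m \<and> m \<le> M \<longrightarrow>
        a k m = (\<Sum>i=1..L. c i * a (k - i) m))"

definition lc_dev :: "nat \<Rightarrow> (nat \<Rightarrow> nat \<Rightarrow> 'a::field) \<Rightarrow> nat \<Rightarrow> int" where
  "lc_dev M a n = int (lin_compl M a n) - \<lceil>real (n * M) / real (M + 1)\<rceil>"

definition Ncount :: "'a::{finite,field} itself \<Rightarrow> nat \<Rightarrow> nat \<Rightarrow> int \<Rightarrow> nat" where
  "Ncount _ M n d = card {a :: nat \<Rightarrow> nat \<Rightarrow> 'a. a \<in> prefixes M n \<and> lc_dev M a n = d}"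

text \<open>BDM states (b_1..b_M, d; T, t): b as an int list of length M (b_m = b ! (m-1)).\<close>
type_synonym bdm_state = "int list \<times> int \<times> int \<times> nat"

definition aug_states :: "nat \<Rightarrow> bdm_state set" where
  "aug_states M = {(b, d, T, t). length b = M \<and> 1 \<le> t \<and> t \<le> M + 1 \<and> d + T + sum_list b = 0}"

definition bdm_states :: "nat \<Rightarrow> bdm_state set" where
  "bdm_states M = {s \<in> aug_states M. case s of (b, d, T, t) \<Rightarrow> 0 \<le> T \<and> T \<le> int M}"

definition S_set :: "nat \<Rightarrow> int \<Rightarrow> nat \<Rightarrow> int \<Rightarrow> bdm_state set" where
  "S_set M T0 t0 d0 = {s \<in> bdm_states M. case s of (b, d, T, t) \<Rightarrow> T = T0 \<and> t = t0 \<and> d = d0}"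

definition s_init :: "nat \<Rightarrow> bdm_state" where
  "s_init M = (replicate M 0, 0, 0, M + 1)"

text \<open>One transition of the BDM (states outside the described cases are irrelevant
  and stay put).\<close>
definition bdm_step :: "nat \<Rightarrow> nat \<Rightarrow> bdm_state \<Rightarrow> bdm_state pmf" where
  "bdm_step q M s = (case s of (b, d, T, t) \<Rightarrow>
     if 1 \<le> t \<and> t \<le> M then
       (if b ! (t - 1) > d then
          map_pmf (\<lambda>x. if x then (b, d, T, t + 1) else (b[t - 1 := d], b ! (t - 1), T, t + 1))
                  (bernoulli_pmf (1 / real q))
        else return_pmf (b, d, T, t + 1))
     else if t = M + 1 \<and> T < int M then return_pmf (b, d - 1, T + 1, 1)
     else if t = M + 1 \<and> T = int M then return_pmf (map (\<lambda>x. x + 1) b, d, 0, 1)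
     else return_pmf s)"

primrec bdm_mu :: "nat \<Rightarrow> nat \<Rightarrow> nat \<Rightarrow> bdm_state pmf" where
  "bdm_mu q M 0 = return_pmf (s_init M)"
| "bdm_mu q M (Suc \<tau>) = bind_pmf (bdm_mu q M \<tau>) (bdm_step q M)"

end

theory Submission
  imports Defs
begin

text \<open>The BDM is the image of a Berlekamp--Massey algorithm for multisequences that reads the
  terms in the order \<open>a 1 1, \<dots>, a 1 M, a 2 1, \<dots>\<close> and maintains a reduced basis of the module
  of polynomial vectors describing the LFSRs that generate the prefix read so far: a solution
  whose order \<open>\<nu> 0\<close> is the current linear complexity, and one pivot per sequence.  Reading a term
  changes the orders only through whether the new discrepancy vanishes and whether
  \<open>\<nu> 0 < \<nu> t\<close>; in BDM coordinates this is exactly the transition rule with \<open>b_t > d\<close>.  The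
  discrepancy is affine with slope \<open>1\<close> in the new term, so for a uniformly random term it
  vanishes with probability \<open>1 / q\<close>.  Hence the uniform distribution on prefixes is carried to
  \<open>\<mu>\<^sub>\<tau>\<close> after \<open>\<tau>\<close> steps, and after \<open>(M + 1) n\<close> steps the deviation coordinate of the
  BDM state is \<open>L_a(n) - \<lceil>n M / (M + 1)\<rceil>\<close>.\<close>

section \<open>Polynomials of bounded degree\<close>

definition deg_lt :: "'a::zero poly \<Rightarrow> nat \<Rightarrow> bool" where
  "deg_lt p e \<longleftrightarrow> (\<forall>k\<ge>e. coeff p k = 0)"

lemma deg_lt_iff: "deg_lt p e \<longleftrightarrow> p = 0 \<or> degree p < e"
proof
  assume "deg_lt p e"
  then show "p = 0 \<or> degree p < e" unfolding deg_lt_def by (metis leading_coeff_0_iff not_le)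
next
  assume "p = 0 \<or> degree p < e"
  then show "deg_lt p e" unfolding deg_lt_def by (auto intro: coeff_eq_0)
qed

lemma deg_lt_mono: "deg_lt p e \<Longrightarrow> e \<le> e' \<Longrightarrow> deg_lt p e'"
  unfolding deg_lt_def by auto

lemma deg_lt_0 [simp]: "deg_lt 0 e"
  unfolding deg_lt_def by auto

lemma deg_lt_coeff: "deg_lt p e \<Longrightarrow> e \<le> k \<Longrightarrow> coeff p k = 0"
  unfolding deg_lt_def by auto

lemma deg_lt_Suc_coeff: "deg_lt p (Suc e) \<Longrightarrow> coeff p e = 0 \<Longrightarrow> deg_lt p e"
  unfolding deg_lt_def by (metis le_antisym not_less_eq_eq)

lemma deg_lt_diff:
  "deg_lt p e \<Longrightarrow> deg_lt (q::'a::ab_group_add poly) e \<Longrightarrow> deg_lt (p - q) e"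
  unfolding deg_lt_def by auto

lemma deg_lt_smult: "deg_lt p e \<Longrightarrow> deg_lt (smult c p) e"
  unfolding deg_lt_def by auto

lemma deg_lt_monom_mult: "deg_lt p e \<Longrightarrow> deg_lt (monom c k * p) (k + e)"
  unfolding deg_lt_def by (auto simp: coeff_monom_mult)

lemma deg_lt_mult: "deg_lt (q::'a::idom poly) e \<Longrightarrow> deg_lt (p * q) (degree p + e)"
  by (cases "p = 0 \<or> q = 0") (auto simp: deg_lt_iff degree_mult_eq)

lemma deg_lt_sum:
  "finite A \<Longrightarrow> (\<And>j. j \<in> A \<Longrightarrow> deg_lt (f j) e) \<Longrightarrow> deg_lt (\<Sum>j\<in>A. f j) e"
  unfolding deg_lt_def by (auto simp: coeff_sum)

lemma deg_lt_pCons_add: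
  "deg_lt p e \<Longrightarrow> deg_lt q (Suc e) \<Longrightarrow> deg_lt (pCons 0 p + smult c q) (Suc e)"
  unfolding deg_lt_def by (auto simp: coeff_pCons split: nat.splits)

lemma coeff_mult_top:
  fixes p q :: "'a::idom poly"
  assumes "p \<noteq> 0" "coeff q e \<noteq> 0" "deg_lt q (Suc e)"
  shows "coeff (p * q) (degree p + e) = lead_coeff p * coeff q e"
proof -
  have "degree q = e"
    using assms(2,3) le_degree[of q e] by (auto simp: deg_lt_iff)
  then show ?thesis using coeff_mult_degree_sum[of p q] by simp
qed

lemma sum_fun_upd:
  "finite A \<Longrightarrow> x \<in> A \<Longrightarrow> sum (f(x := y)) A + f x = sum f A + (y::'b::comm_monoid_add)"
  by (simp add: sum.remove add.commute add.left_commute)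

lemma sum_cong_two:
  assumes "finite A" "x \<in> A" "y \<in> A" "x \<noteq> y"
    and "\<And>j. j \<in> A \<Longrightarrow> j \<noteq> x \<Longrightarrow> j \<noteq> y \<Longrightarrow> f j = g j"
    and "f x + f y = g x + g y"
  shows "sum f A = sum g A"
proof -
  have split: "sum h A = h x + h y + sum h (A - {x, y})" for h :: "'a \<Rightarrow> 'b"
  proof -
    have "sum h A = h x + sum h (A - {x})" using assms by (simp add: sum.remove)
    also have "sum h (A - {x}) = h y + sum h (A - {x} - {y})" using assms by (intro sum.remove) auto
    finally show ?thesis by (simp add: add.assoc Diff_insert2[symmetric])
  qed
  have "sum f (A - {x, y}) = sum g (A - {x, y})" using assms(5) by (intro sum.cong) auto
  then show ?thesis using split[of f] split[of g] assms(6) by simp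
qed

primrec seq_poly :: "(nat \<Rightarrow> nat \<Rightarrow> 'a::comm_ring_1) \<Rightarrow> nat \<Rightarrow> nat \<Rightarrow> 'a poly" where
  "seq_poly a m 0 = 0"
| "seq_poly a m (Suc n) = pCons (a (Suc n) m) (seq_poly a m n)"

lemma coeff_seq_poly: "coeff (seq_poly a m n) j = (if j < n then a (n - j) m else 0)"
  by (induction n arbitrary: j) (auto simp: coeff_pCons split: nat.splits)

lemma seq_poly_cong:
  "(\<And>k. 1 \<le> k \<Longrightarrow> k \<le> n \<Longrightarrow> a k m = a' k m) \<Longrightarrow> seq_poly a m n = seq_poly a' m n"
  by (induction n) auto

text \<open>If \<open>coeff (v 0) e = 1\<close> and \<open>deg_lt (v 0) (Suc e)\<close>, then \<open>v 0\<close> is the reciprocal of a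
  feedback polynomial of length \<open>e\<close>, and \<open>deg_lt (residual a n m v) e\<close> says that this LFSR
  generates \<open>a 1 m, \<dots>, a n m\<close>; the component \<open>v m\<close> absorbs the contribution of the
  initial values.\<close>

definition residual ::
    "(nat \<Rightarrow> nat \<Rightarrow> 'a::comm_ring_1) \<Rightarrow> nat \<Rightarrow> nat \<Rightarrow> (nat \<Rightarrow> 'a poly) \<Rightarrow> 'a poly" where
  "residual a n m v = v 0 * seq_poly a m n - monom 1 n * v m"

lemma residual_Suc:
  "residual a (Suc n) m v = pCons 0 (residual a n m v) + smult (a (Suc n) m) (v 0)"
  unfolding residual_def
  by (simp add: monom_Suc mult_pCons_right mult_pCons_left algebra_simps)

lemma residual_diff:
  "residual a n m (\<lambda>i. u i - r * w i) = residual a n m u - r * residual a n m w"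
  unfolding residual_def by (simp add: algebra_simps)

lemma residual_smult_diff:
  "residual a n m (\<lambda>i. r * u i - smult c (w i)) = r * residual a n m u - smult c (residual a n m w)"
  unfolding residual_def by (simp add: smult_diff_right algebra_simps)

definition is_solution ::
    "nat \<Rightarrow> (nat \<Rightarrow> nat \<Rightarrow> 'a::field) \<Rightarrow> (nat \<Rightarrow> nat) \<Rightarrow> nat \<Rightarrow> (nat \<Rightarrow> 'a poly) \<Rightarrow> bool" where
  "is_solution M a N e w \<longleftrightarrow>
     coeff (w 0) e = 1 \<and> deg_lt (w 0) (Suc e) \<and> (\<forall>m\<in>{1..M}. deg_lt (residual a (N m) m w) e)"

text \<open>A pivot for sequence \<open>j\<close> plays the role of the auxiliary polynomial of the
  Berlekamp--Massey algorithm: its residual in sequence \<open>j\<close> has exact degree \<open>e - 1\<close>, and is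
  lower still in every sequence \<open>m\<close> that comes before \<open>j\<close> in the order \<open>R\<close>.\<close>

definition is_pivot :: "nat \<Rightarrow> (nat \<Rightarrow> nat \<Rightarrow> 'a::field) \<Rightarrow> (nat \<Rightarrow> nat) \<Rightarrow>
    (nat \<Rightarrow> nat \<Rightarrow> bool) \<Rightarrow> nat \<Rightarrow> nat \<Rightarrow> (nat \<Rightarrow> 'a poly) \<Rightarrow> bool" where
  "is_pivot M a N R j e w \<longleftrightarrow>
     1 \<le> e \<and> deg_lt (w 0) e \<and> coeff (residual a (N j) j w) (e - 1) \<noteq> 0 \<and>
     (\<forall>m\<in>{1..M}. deg_lt (residual a (N m) m w) e \<and>
        (R m j \<longrightarrow> deg_lt (residual a (N m) m w) (e - 1)))"

lemma residual_step:
  assumes "N' = N(t := Suc (N t))"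
  shows "residual a (N' t) t v = pCons 0 (residual a (N t) t v) + smult (a (Suc (N t)) t) (v 0)"
    and "m \<noteq> t \<Longrightarrow> residual a (N' m) m v = residual a (N m) m v"
  using assms by (auto simp: residual_Suc)

lemma residual_step_solution:
  assumes N': "N' = N(t := Suc (N t))" and t: "t \<in> {1..M}" and P: "is_solution M a N e w"
  shows "deg_lt (residual a (N' t) t w) (Suc e)"
proof -
  have b0: "deg_lt (w 0) (Suc e)" and bt: "deg_lt (residual a (N t) t w) e"
    using P t by (auto simp: is_solution_def)
  show ?thesis using deg_lt_pCons_add[OF bt b0] by (simp add: residual_step(1)[OF N'])
qed

lemma residual_step_pivot:
  assumes N': "N' = N(t := Suc (N t))" and t: "t \<in> {1..M}" and P: "is_pivot M a N R t e w"
  shows "deg_lt (residual a (N' t) t w) (Suc e)" and "coeff (residual a (N' t) t w) e \<noteq> 0"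
proof -
  have e1: "1 \<le> e" and b0: "deg_lt (w 0) e" and piv: "coeff (residual a (N t) t w) (e - 1) \<noteq> 0"
    and bt: "deg_lt (residual a (N t) t w) e"
    using P t by (auto simp: is_pivot_def)
  have "coeff (residual a (N' t) t w) e = coeff (residual a (N t) t w) (e - 1)"
    using b0 e1 by (cases e) (auto simp: residual_step(1)[OF N'] deg_lt_def)
  with piv show "coeff (residual a (N' t) t w) e \<noteq> 0" by simp
  show "deg_lt (residual a (N' t) t w) (Suc e)"
    using deg_lt_pCons_add[OF bt, of "w 0" "a (Suc (N t)) t"] b0
    by (simp add: residual_step(1)[OF N'] deg_lt_mono)
qed

lemma pivot_step_other:
  assumes N': "N' = N(t := Suc (N t))" and t: "t \<in> {1..M}" and j: "j \<in> {1..M}" "j \<noteq> t"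
    and P: "is_pivot M a N R j e w" and Rt: "R t j"
    and R': "\<And>m. m \<in> {1..M} \<Longrightarrow> R' m j \<Longrightarrow> m \<noteq> t \<and> R m j"
  shows "is_pivot M a N' R' j e w"
proof -
  have e1: "1 \<le> e" and b0: "deg_lt (w 0) e" using P by (auto simp: is_pivot_def)
  have bt: "deg_lt (residual a (N t) t w) (e - 1)" using P Rt t by (auto simp: is_pivot_def)
  have "deg_lt (residual a (N' t) t w) e"
    using deg_lt_pCons_add[OF bt, of "w 0" "a (Suc (N t)) t"] b0 e1
    by (simp add: residual_step(1)[OF N'])
  then have "deg_lt (residual a (N' m) m w) e \<and>
      (R' m j \<longrightarrow> deg_lt (residual a (N' m) m w) (e - 1))"
    if m: "m \<in> {1..M}" for m
  proof (cases "m = t")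
    case True then show ?thesis using R'[OF m] \<open>deg_lt (residual a (N' t) t w) e\<close> by auto
  next
    case False
    have eq: "residual a (N' m) m w = residual a (N m) m w"
      by (rule residual_step(2)[OF N' False])
    show ?thesis using P m R' by (auto simp: is_pivot_def eq)
  qed
  moreover have "residual a (N' j) j w = residual a (N j) j w" by (rule residual_step(2)[OF N' j(2)])
  ultimately show ?thesis using P unfolding is_pivot_def by auto
qed

lemma pivot_step_same:
  assumes N': "N' = N(t := Suc (N t))" and t: "t \<in> {1..M}"
    and P: "is_pivot M a N R t e w" and irr: "\<not> R' t t"
  shows "is_pivot M a N' R' t (Suc e) w"
proof -
  have "deg_lt (residual a (N' m) m w) (Suc e) \<and>
      (R' m t \<longrightarrow> deg_lt (residual a (N' m) m w) (Suc e - 1))" if m: "m \<in> {1..M}" for m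
  proof (cases "m = t")
    case True then show ?thesis using residual_step_pivot(1)[OF N' t P] irr by simp
  next
    case False
    have "deg_lt (residual a (N m) m w) e" using P m by (auto simp: is_pivot_def)
    then show ?thesis using deg_lt_mono[of _ e "Suc e"] by (simp add: residual_step(2)[OF N' False])
  qed
  moreover have "deg_lt (w 0) (Suc e)" using P deg_lt_mono by (fastforce simp: is_pivot_def)
  ultimately show ?thesis using residual_step_pivot(2)[OF N' t P] unfolding is_pivot_def by auto
qed

lemma solution_step_keep:
  assumes N': "N' = N(t := Suc (N t))" and t: "t \<in> {1..M}"
    and P: "is_solution M a N e w" and del: "coeff (residual a (N' t) t w) e = 0"
  shows "is_solution M a N' e w"
proof -
  have b0: "deg_lt (w 0) (Suc e)" and bt: "deg_lt (residual a (N t) t w) e"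
    using P t by (auto simp: is_solution_def)
  have "deg_lt (residual a (N' t) t w) (Suc e)"
    using deg_lt_pCons_add[OF bt b0] by (simp add: residual_step(1)[OF N'])
  then have bt': "deg_lt (residual a (N' t) t w) e" using del deg_lt_Suc_coeff by blast
  have "deg_lt (residual a (N' m) m w) e" if m: "m \<in> {1..M}" for m
  proof (cases "m = t")
    case True then show ?thesis using bt' by simp
  next
    case False
    have eq: "residual a (N' m) m w = residual a (N m) m w"
      by (rule residual_step(2)[OF N' False])
    show ?thesis using P m by (auto simp: is_solution_def eq)
  qed
  then show ?thesis using P unfolding is_solution_def by auto
qed

lemma solution_step_elim:
  assumes N': "N' = N(t := Suc (N t))" and t: "t \<in> {1..M}"
    and P: "is_solution M a N e0 w0" and Q: "is_pivot M a N R t et wt" and le: "et \<le> e0"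
    and lc: "lc = coeff (residual a (N' t) t wt) et"
    and dl: "\<delta> = coeff (residual a (N' t) t w0) e0"
  shows "is_solution M a N' e0 (\<lambda>i. w0 i - monom (\<delta> / lc) (e0 - et) * wt i)"
proof -
  define c where "c = \<delta> / lc"
  define k where "k = e0 - et"
  have ke: "k + et = e0" using le by (simp add: k_def)
  have lcn: "lc \<noteq> 0" using residual_step_pivot(2)[OF N' t Q] lc by simp
  have f0: "coeff (w0 0) e0 = 1" "deg_lt (w0 0) (Suc e0)" using P by (auto simp: is_solution_def)
  have ft: "deg_lt (wt 0) et" using Q by (auto simp: is_pivot_def)
  have "coeff (w0 0 - monom c k * wt 0) e0 = 1"
    using f0 ft ke by (auto simp: coeff_monom_mult deg_lt_def)
  moreover have "deg_lt (w0 0 - monom c k * wt 0) (Suc e0)"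
    using deg_lt_diff[OF f0(2) deg_lt_mono[OF deg_lt_monom_mult[OF ft, of c k]]] ke by simp
  moreover have "deg_lt (residual a (N' m) m (\<lambda>i. w0 i - monom c k * wt i)) e0"
    if m: "m \<in> {1..M}" for m
  proof (cases "m = t")
    case True
    have b1: "deg_lt (residual a (N' t) t w0) (Suc e0)" by (rule residual_step_solution[OF N' t P])
    have b2: "deg_lt (monom c k * residual a (N' t) t wt) (Suc e0)"
      using deg_lt_monom_mult[OF residual_step_pivot(1)[OF N' t Q], of c k] ke by simp
    have "coeff (residual a (N' t) t w0 - monom c k * residual a (N' t) t wt) e0 = \<delta> - c * lc"
      using ke by (simp add: coeff_monom_mult dl lc k_def)
    also have "\<dots> = 0" using lcn by (simp add: c_def)
    finally have "coeff (residual a (N' t) t w0 - monom c k * residual a (N' t) t wt) e0 = 0" .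
    then show ?thesis
      using True deg_lt_Suc_coeff[OF deg_lt_diff[OF b1 b2]] by (simp add: residual_diff)
  next
    case False
    have b1: "deg_lt (residual a (N m) m w0) e0" using P m by (auto simp: is_solution_def)
    have b2: "deg_lt (residual a (N m) m wt) et" using Q m by (auto simp: is_pivot_def)
    have b3: "deg_lt (monom c k * residual a (N m) m wt) e0"
      using deg_lt_monom_mult[OF b2, of c k] ke by simp
    show ?thesis
      using deg_lt_diff[OF b1 b3] by (simp add: residual_diff residual_step(2)[OF N' False])
  qed
  ultimately show ?thesis unfolding is_solution_def c_def k_def by auto
qed

lemma solution_step_swap:
  assumes N': "N' = N(t := Suc (N t))" and t: "t \<in> {1..M}"
    and P: "is_solution M a N e0 w0" and Q: "is_pivot M a N R t et wt" and lt: "e0 < et"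
    and lc: "lc = coeff (residual a (N' t) t wt) et"
    and dl: "\<delta> = coeff (residual a (N' t) t w0) e0"
  shows "is_solution M a N' et (\<lambda>i. monom 1 (et - e0) * w0 i - smult (\<delta> / lc) (wt i))"
proof -
  define c where "c = \<delta> / lc"
  define k where "k = et - e0"
  have ke: "k + e0 = et" using lt by (simp add: k_def)
  have lcn: "lc \<noteq> 0" using residual_step_pivot(2)[OF N' t Q] lc by simp
  have f0: "coeff (w0 0) e0 = 1" "deg_lt (w0 0) (Suc e0)" using P by (auto simp: is_solution_def)
  have ft: "deg_lt (wt 0) et" using Q by (auto simp: is_pivot_def)
  have "coeff (monom 1 k * w0 0 - smult c (wt 0)) et = 1"
    using f0 ft ke by (auto simp: coeff_monom_mult deg_lt_def)
  moreover have "deg_lt (monom 1 k * w0 0 - smult c (wt 0)) (Suc et)"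
    using deg_lt_diff[OF deg_lt_monom_mult[OF f0(2), of 1 k] deg_lt_smult[OF deg_lt_mono[OF ft]]] ke
    by simp
  moreover have "deg_lt (residual a (N' m) m (\<lambda>i. monom 1 k * w0 i - smult c (wt i))) et"
    if m: "m \<in> {1..M}" for m
  proof (cases "m = t")
    case True
    have b1: "deg_lt (monom 1 k * residual a (N' t) t w0) (Suc et)"
      using deg_lt_monom_mult[OF residual_step_solution[OF N' t P], of 1 k] ke by simp
    have b2: "deg_lt (smult c (residual a (N' t) t wt)) (Suc et)"
      using deg_lt_smult[OF residual_step_pivot(1)[OF N' t Q]] by simp
    have "coeff (monom 1 k * residual a (N' t) t w0 - smult c (residual a (N' t) t wt)) et
        = \<delta> - c * lc"
      using ke lt by (simp add: coeff_monom_mult dl lc k_def)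
    also have "\<dots> = 0" using lcn by (simp add: c_def)
    finally show ?thesis
      using True deg_lt_Suc_coeff[OF deg_lt_diff[OF b1 b2]] by (simp add: residual_smult_diff)
  next
    case False
    have b1: "deg_lt (residual a (N m) m w0) e0" using P m by (auto simp: is_solution_def)
    have b2: "deg_lt (residual a (N m) m wt) et" using Q m by (auto simp: is_pivot_def)
    have b3: "deg_lt (monom 1 k * residual a (N m) m w0) et"
      using deg_lt_monom_mult[OF b1, of 1 k] ke by simp
    show ?thesis
      using deg_lt_diff[OF b3 deg_lt_smult[OF b2]]
      by (simp add: residual_smult_diff residual_step(2)[OF N' False])
  qed
  ultimately show ?thesis unfolding is_solution_def c_def k_def by auto
qed

lemma pivot_step_swap:
  assumes N': "N' = N(t := Suc (N t))" and t: "t \<in> {1..M}"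
    and P: "is_solution M a N e0 w0" and dl: "coeff (residual a (N' t) t w0) e0 \<noteq> 0"
    and irr: "\<not> R' t t"
  shows "is_pivot M a N' R' t (Suc e0) w0"
proof -
  have b0: "deg_lt (w0 0) (Suc e0)" using P by (auto simp: is_solution_def)
  have bt: "deg_lt (residual a (N' t) t w0) (Suc e0)" by (rule residual_step_solution[OF N' t P])
  have "deg_lt (residual a (N' m) m w0) (Suc e0) \<and>
      (R' m t \<longrightarrow> deg_lt (residual a (N' m) m w0) (Suc e0 - 1))" if m: "m \<in> {1..M}" for m
  proof (cases "m = t")
    case True then show ?thesis using bt irr by simp
  next
    case False
    have "deg_lt (residual a (N m) m w0) e0" using P m by (auto simp: is_solution_def)
    then show ?thesis using deg_lt_mono[of _ e0 "Suc e0"] by (simp add: residual_step(2)[OF N' False])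
  qed
  then show ?thesis using b0 dl unfolding is_pivot_def by auto
qed

definition spans :: "nat \<Rightarrow> (nat \<Rightarrow> nat \<Rightarrow> 'a::comm_ring_1 poly) \<Rightarrow> bool" where
  "spans M w \<longleftrightarrow> (\<forall>v. \<exists>p. \<forall>i\<le>M. v i = (\<Sum>j\<le>M. p j * w j i))"

lemma spans_elim:
  assumes sp: "spans M w" and t: "t \<in> {1..M}"
  shows "spans M (w(0 := (\<lambda>i. w 0 i - r * w t i)))"
  unfolding spans_def
proof
  fix v
  obtain p where p: "\<And>i. i \<le> M \<Longrightarrow> v i = (\<Sum>j\<le>M. p j * w j i)"
    using sp unfolding spans_def by blast
  define p' where "p' = p(t := p t + p 0 * r)"
  have "v i = (\<Sum>j\<le>M. p' j * (w(0 := (\<lambda>i. w 0 i - r * w t i))) j i)" if i: "i \<le> M" for i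
  proof -
    have t0: "t \<noteq> 0" "t \<le> M" using t by auto
    have e: "p' 0 * (w 0 i - r * w t i) + p' t * w t i = p 0 * w 0 i + p t * w t i"
      using t0 by (simp add: p'_def algebra_simps)
    have "(\<Sum>j\<le>M. p' j * (w(0 := (\<lambda>i. w 0 i - r * w t i))) j i) = (\<Sum>j\<le>M. p j * w j i)"
      by (rule sum_cong_two[of _ 0 t]) (use t0 e in \<open>auto simp: p'_def\<close>)
    then show ?thesis using p i by simp
  qed
  then show "\<exists>p. \<forall>i\<le>M. v i = (\<Sum>j\<le>M. p j * (w(0 := (\<lambda>i. w 0 i - r * w t i))) j i)" by blast
qed

lemma spans_swap:
  assumes sp: "spans M w" and t: "t \<in> {1..M}" and c: "(c::'a::field) \<noteq> 0"
  shows "spans M (w(0 := (\<lambda>i. monom 1 k * w 0 i - smult c (w t i)), t := w 0))"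
  unfolding spans_def
proof
  fix v
  obtain p where p: "\<And>i. i \<le> M \<Longrightarrow> v i = (\<Sum>j\<le>M. p j * w j i)"
    using sp unfolding spans_def by blast
  define p' where "p' = p(0 := smult (-(1/c)) (p t), t := p 0 + smult (1/c) (monom 1 k * p t))"
  let ?w = "w(0 := (\<lambda>i. monom 1 k * w 0 i - smult c (w t i)), t := w 0)"
  have "v i = (\<Sum>j\<le>M. p' j * ?w j i)" if i: "i \<le> M" for i
  proof -
    have e: "smult (-(1/c)) (p t) * (monom 1 k * w 0 i - smult c (w t i))
        + (p 0 + smult (1/c) (monom 1 k * p t)) * w 0 i = p 0 * w 0 i + p t * w t i"
    proof -
      have "smult (-(1/c)) (p t) * (monom 1 k * w 0 i - smult c (w t i))
          = smult (-(1/c)) (p t * monom 1 k * w 0 i) + p t * w t i"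
        using c by (simp add: algebra_simps mult_smult_right mult_smult_left)
      moreover have "(p 0 + smult (1/c) (monom 1 k * p t)) * w 0 i
          = p 0 * w 0 i + smult (1/c) (p t * monom 1 k * w 0 i)"
        by (simp add: algebra_simps mult_smult_left)
      ultimately show ?thesis by (simp add: smult_minus_left)
    qed
    have t0: "t \<noteq> 0" "t \<le> M" using t by auto
    have "(\<Sum>j\<le>M. p' j * ?w j i) = (\<Sum>j\<le>M. p j * w j i)"
      by (rule sum_cong_two[of _ 0 t]) (use t0 e in \<open>auto simp: p'_def\<close>)
    then show ?thesis using p i by simp
  qed
  then show "\<exists>p. \<forall>i\<le>M. v i = (\<Sum>j\<le>M. p j * ?w j i)" by blast
qed

section \<open>A multisequence Berlekamp--Massey algorithm\<close>

text \<open>The algorithm reads the terms column by column: a state with \<open>bm_col = k\<close> and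
  \<open>bm_pos = t \<le> M\<close> is about to read \<open>a k t\<close>, and \<open>bm_pos = M + 1\<close> marks a completed column.
  It keeps a current solution \<open>bm_vec st 0\<close> and a pivot \<open>bm_vec st j\<close> for every sequence
  \<open>j\<close>, with orders \<open>bm_ord st\<close>.\<close>

datatype 'a bm = BM (bm_col: nat) (bm_pos: nat) (bm_ord: "nat \<Rightarrow> nat") (bm_vec: "nat \<Rightarrow> nat \<Rightarrow> 'a")

definition bm_len :: "'a bm \<Rightarrow> nat \<Rightarrow> nat" where
  "bm_len st m = (if m < bm_pos st then bm_col st else bm_col st - 1)"

text \<open>\<open>before M t\<close> orders the sequences cyclically as \<open>t, t + 1, \<dots>, M, 1, \<dots>, t - 1\<close>.\<close>

definition pos_key :: "nat \<Rightarrow> nat \<Rightarrow> nat \<Rightarrow> nat" where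
  "pos_key M t m = (if t \<le> m then m - t else m + Suc M - t)"

definition before :: "nat \<Rightarrow> nat \<Rightarrow> nat \<Rightarrow> nat \<Rightarrow> bool" where
  "before M t m j \<longleftrightarrow> pos_key M t m < pos_key M t j"

definition bm_step :: "nat \<Rightarrow> (nat \<Rightarrow> nat \<Rightarrow> 'a::field) \<Rightarrow> 'a poly bm \<Rightarrow> 'a poly bm" where
  "bm_step M a st =
    (if bm_pos st \<le> M then
      (let t = bm_pos st; n = bm_col st; \<nu> = bm_ord st; w = bm_vec st;
           \<delta> = coeff (residual a n t (w 0)) (\<nu> 0); lc = coeff (residual a n t (w t)) (\<nu> t) in
       if \<delta> = 0 then BM n (Suc t) (\<nu>(t := Suc (\<nu> t))) w
       else if \<nu> t \<le> \<nu> 0 then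
         BM n (Suc t) (\<nu>(t := Suc (\<nu> t)))
           (w(0 := (\<lambda>i. w 0 i - monom (\<delta> / lc) (\<nu> 0 - \<nu> t) * w t i)))
       else
         BM n (Suc t) (\<nu>(0 := \<nu> t, t := Suc (\<nu> 0)))
           (w(0 := (\<lambda>i. monom 1 (\<nu> t - \<nu> 0) * w 0 i - smult (\<delta> / lc) (w t i)), t := w 0)))
     else BM (Suc (bm_col st)) 1 (bm_ord st) (bm_vec st))"

definition bm_init :: "nat \<Rightarrow> 'a::field poly bm" where
  "bm_init M = BM 0 (Suc M) (\<lambda>j. if j = 0 then 0 else 1) (\<lambda>j i. if i = j then 1 else 0)"

primrec bm_run :: "nat \<Rightarrow> (nat \<Rightarrow> nat \<Rightarrow> 'a::field) \<Rightarrow> nat \<Rightarrow> 'a poly bm" where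
  "bm_run M a 0 = bm_init M"
| "bm_run M a (Suc \<tau>) = bm_step M a (bm_run M a \<tau>)"

text \<open>The order sum identity is what makes the projection to the BDM land on states with
  \<open>d + T + sum_list b = 0\<close>.\<close>

definition reduced_basis :: "nat \<Rightarrow> (nat \<Rightarrow> nat \<Rightarrow> 'a::field) \<Rightarrow> (nat \<Rightarrow> nat) \<Rightarrow>
    (nat \<Rightarrow> nat \<Rightarrow> bool) \<Rightarrow> (nat \<Rightarrow> nat) \<Rightarrow> (nat \<Rightarrow> nat \<Rightarrow> 'a poly) \<Rightarrow> bool" where
  "reduced_basis M a N R \<nu> w \<longleftrightarrow>
     is_solution M a N (\<nu> 0) (w 0) \<and> (\<forall>j\<in>{1..M}. is_pivot M a N R j (\<nu> j) (w j)) \<and>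
     (\<Sum>j\<le>M. \<nu> j) = (\<Sum>m=1..M. N m) + M \<and> spans M w"

definition bm_inv :: "nat \<Rightarrow> (nat \<Rightarrow> nat \<Rightarrow> 'a::field) \<Rightarrow> 'a poly bm \<Rightarrow> bool" where
  "bm_inv M a st \<longleftrightarrow> 1 \<le> bm_pos st \<and> bm_pos st \<le> Suc M \<and> (bm_pos st \<le> M \<longrightarrow> 1 \<le> bm_col st) \<and>
     reduced_basis M a (bm_len st) (before M (bm_pos st)) (bm_ord st) (bm_vec st)"

lemma bm_inv_init: "bm_inv M a (bm_init M)"
proof -
  have res: "residual a 0 m v = - v m" for m and v :: "nat \<Rightarrow> 'a poly"
    by (simp add: residual_def)
  have len: "bm_len (bm_init M) m = 0" for m :: nat
    by (simp add: bm_len_def bm_init_def)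
  have "is_solution M a (bm_len (bm_init M)) 0 (\<lambda>i. if i = 0 then 1 else 0)"
    unfolding is_solution_def len res by (auto simp: deg_lt_def)
  moreover have "\<forall>j\<in>{1..M}. is_pivot M a (bm_len (bm_init M)) (before M (Suc M)) j 1
      (\<lambda>i. if i = j then 1 else 0)"
    unfolding before_def is_pivot_def len res by (auto simp: deg_lt_def)
  moreover have "spans M (\<lambda>j i. if i = j then (1::'a poly) else 0)"
    unfolding spans_def by (simp add: if_distrib cong: if_cong) blast
  moreover have "(\<Sum>j\<le>M. (if j = 0 then 0 else 1::nat)) = M"
    by (simp add: sum.If_cases Diff_eq[symmetric])
  moreover have init: "bm_pos (bm_init M) = Suc M" "bm_ord (bm_init M) = (\<lambda>j. if j = 0 then 0 else 1)"
    "bm_vec (bm_init M) = (\<lambda>j i. if i = j then (1::'a poly) else 0)"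
    by (simp_all add: bm_init_def)
  ultimately show ?thesis
    unfolding bm_inv_def reduced_basis_def init by (simp add: len)
qed

lemma before_step:
  assumes t: "t \<in> {1..M}"
  shows "\<And>j. j \<in> {1..M} \<Longrightarrow> j \<noteq> t \<Longrightarrow> before M t t j"
    and "\<And>m j. m \<in> {1..M} \<Longrightarrow> j \<in> {1..M} \<Longrightarrow> j \<noteq> t \<Longrightarrow> before M (Suc t) m j \<Longrightarrow>
      m \<noteq> t \<and> before M t m j"
    and "\<not> before M (Suc t) t t"
  using t by (auto simp: before_def pos_key_def split: if_splits)

lemma before_wrap: "m \<in> {1..M} \<Longrightarrow> j \<in> {1..M} \<Longrightarrow> before M 1 m j = before M (Suc M) m j"
  by (auto simp: before_def pos_key_def)

lemma pos_key_inj: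
  "t \<in> {1..Suc M} \<Longrightarrow> m \<in> {1..M} \<Longrightarrow> j \<in> {1..M} \<Longrightarrow> pos_key M t m = pos_key M t j \<Longrightarrow> m = j"
  by (auto simp: pos_key_def split: if_splits)

lemma reduced_basis_cong:
  assumes "\<And>m. m \<in> {1..M} \<Longrightarrow> N m = N' m"
    and "\<And>m j. m \<in> {1..M} \<Longrightarrow> j \<in> {1..M} \<Longrightarrow> R m j = R' m j"
  shows "reduced_basis M a N R \<nu> w = reduced_basis M a N' R' \<nu> w"
proof -
  have "(\<Sum>m=1..M. N m) = (\<Sum>m=1..M. N' m)" using assms(1) by (intro sum.cong) auto
  then show ?thesis using assms unfolding reduced_basis_def is_solution_def is_pivot_def by auto
qed

lemma reduced_basis_step_pivots:
  assumes B: "reduced_basis M a N (before M t) \<nu> w" and t: "t \<in> {1..M}"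
    and N': "N' = N(t := Suc (N t))"
  shows "\<And>j. j \<in> {1..M} \<Longrightarrow> j \<noteq> t \<Longrightarrow> is_pivot M a N' (before M (Suc t)) j (\<nu> j) (w j)"
    and "is_pivot M a N' (before M (Suc t)) t (Suc (\<nu> t)) (w t)"
proof -
  have piv: "\<And>j. j \<in> {1..M} \<Longrightarrow> is_pivot M a N (before M t) j (\<nu> j) (w j)"
    using B by (simp add: reduced_basis_def)
  show "is_pivot M a N' (before M (Suc t)) j (\<nu> j) (w j)" if "j \<in> {1..M}" "j \<noteq> t" for j
    using pivot_step_other[OF N' t that piv[OF that(1)] before_step(1,2)[OF t]] that by blast
  show "is_pivot M a N' (before M (Suc t)) t (Suc (\<nu> t)) (w t)"
    using pivot_step_same[OF N' t piv[OF t]] before_step(3)[OF t] by blast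
qed

lemma sum_len_step:
  fixes N :: "nat \<Rightarrow> nat"
  assumes "t \<in> {1..M}"
  shows "(\<Sum>m=1..M. (N(t := Suc (N t))) m) = Suc (\<Sum>m=1..M. N m)"
proof -
  have "(\<Sum>m=1..M. (N(t := Suc (N t))) m) + N t = (\<Sum>m=1..M. N m) + Suc (N t)"
    by (rule sum_fun_upd) (use assms in auto)
  then show ?thesis by simp
qed

lemma reduced_basis_step_keep:
  assumes B: "reduced_basis M a N (before M t) \<nu> w" and t: "t \<in> {1..M}"
    and N': "N' = N(t := Suc (N t))" and \<delta>: "coeff (residual a (N' t) t (w 0)) (\<nu> 0) = 0"
  shows "reduced_basis M a N' (before M (Suc t)) (\<nu>(t := Suc (\<nu> t))) w"
proof -
  have t0: "t \<noteq> 0" "t \<in> {..M}" using t by auto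
  have sol: "is_solution M a N (\<nu> 0) (w 0)" and sum: "(\<Sum>j\<le>M. \<nu> j) = (\<Sum>m=1..M. N m) + M"
    and sp: "spans M w"
    using B by (simp_all add: reduced_basis_def)
  have "(\<Sum>j\<le>M. (\<nu>(t := Suc (\<nu> t))) j) = Suc (\<Sum>j\<le>M. \<nu> j)"
    using sum_fun_upd[of "{..M}" t \<nu> "Suc (\<nu> t)"] t0 by simp
  then show ?thesis
    using solution_step_keep[OF N' t sol \<delta>] reduced_basis_step_pivots[OF B t N'] sum sp t0
      sum_len_step[OF t, of N, folded N']
    by (auto simp: reduced_basis_def)
qed

lemma reduced_basis_step_elim:
  assumes B: "reduced_basis M a N (before M t) \<nu> w" and t: "t \<in> {1..M}"
    and N': "N' = N(t := Suc (N t))" and le: "\<nu> t \<le> \<nu> 0"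
    and \<delta>: "\<delta> = coeff (residual a (N' t) t (w 0)) (\<nu> 0)"
    and lc: "lc = coeff (residual a (N' t) t (w t)) (\<nu> t)"
  shows "reduced_basis M a N' (before M (Suc t)) (\<nu>(t := Suc (\<nu> t)))
    (w(0 := (\<lambda>i. w 0 i - monom (\<delta> / lc) (\<nu> 0 - \<nu> t) * w t i)))"
proof -
  have t0: "t \<noteq> 0" "t \<in> {..M}" using t by auto
  have sol: "is_solution M a N (\<nu> 0) (w 0)" and sum: "(\<Sum>j\<le>M. \<nu> j) = (\<Sum>m=1..M. N m) + M"
    and sp: "spans M w" and pt: "is_pivot M a N (before M t) t (\<nu> t) (w t)"
    using B t by (simp_all add: reduced_basis_def)
  have "(\<Sum>j\<le>M. (\<nu>(t := Suc (\<nu> t))) j) = Suc (\<Sum>j\<le>M. \<nu> j)"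
    using sum_fun_upd[of "{..M}" t \<nu> "Suc (\<nu> t)"] t0 by simp
  then show ?thesis
    using solution_step_elim[OF N' t sol pt le lc \<delta>] reduced_basis_step_pivots[OF B t N']
      spans_elim[OF sp t] sum t0 sum_len_step[OF t, of N, folded N']
    by (auto simp: reduced_basis_def)
qed

lemma reduced_basis_step_swap:
  assumes B: "reduced_basis M a N (before M t) \<nu> w" and t: "t \<in> {1..M}"
    and N': "N' = N(t := Suc (N t))" and lt: "\<nu> 0 < \<nu> t"
    and \<delta>: "\<delta> = coeff (residual a (N' t) t (w 0)) (\<nu> 0)" and \<delta>0: "\<delta> \<noteq> 0"
    and lc: "lc = coeff (residual a (N' t) t (w t)) (\<nu> t)"
  shows "reduced_basis M a N' (before M (Suc t)) (\<nu>(0 := \<nu> t, t := Suc (\<nu> 0)))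
    (w(0 := (\<lambda>i. monom 1 (\<nu> t - \<nu> 0) * w 0 i - smult (\<delta> / lc) (w t i)), t := w 0))"
proof -
  have t0: "t \<noteq> 0" "t \<in> {..M}" using t by auto
  have sol: "is_solution M a N (\<nu> 0) (w 0)" and sum: "(\<Sum>j\<le>M. \<nu> j) = (\<Sum>m=1..M. N m) + M"
    and sp: "spans M w" and pt: "is_pivot M a N (before M t) t (\<nu> t) (w t)"
    using B t by (simp_all add: reduced_basis_def)
  have "lc \<noteq> 0" using residual_step_pivot(2)[OF N' t pt] lc by simp
  then have "\<delta> / lc \<noteq> 0" using \<delta>0 by simp
  have "(\<Sum>j\<le>M. (\<nu>(0 := \<nu> t)) j) + \<nu> 0 = (\<Sum>j\<le>M. \<nu> j) + \<nu> t"
    using sum_fun_upd[of "{..M}" 0 \<nu> "\<nu> t"] by simp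
  moreover have "(\<Sum>j\<le>M. (\<nu>(0 := \<nu> t, t := Suc (\<nu> 0))) j) + \<nu> t
      = (\<Sum>j\<le>M. (\<nu>(0 := \<nu> t)) j) + Suc (\<nu> 0)"
    using sum_fun_upd[of "{..M}" t "\<nu>(0 := \<nu> t)" "Suc (\<nu> 0)"] t0 by simp
  ultimately have "(\<Sum>j\<le>M. (\<nu>(0 := \<nu> t, t := Suc (\<nu> 0))) j) = Suc (\<Sum>j\<le>M. \<nu> j)"
    by simp
  moreover have "coeff (residual a (N' t) t (w 0)) (\<nu> 0) \<noteq> 0" using \<delta> \<delta>0 by simp
  then have "is_pivot M a N' (before M (Suc t)) t (Suc (\<nu> 0)) (w 0)"
    using pivot_step_swap[OF N' t sol, where R' = "before M (Suc t)"] before_step(3)[OF t] by blast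
  ultimately show ?thesis
    using solution_step_swap[OF N' t sol pt lt lc \<delta>] reduced_basis_step_pivots(1)[OF B t N']
      spans_swap[OF sp t \<open>\<delta> / lc \<noteq> 0\<close>] sum t0 sum_len_step[OF t, of N, folded N']
    by (auto simp: reduced_basis_def)
qed

lemma bm_len_step:
  assumes "bm_pos st \<le> M" "1 \<le> bm_col st"
  shows "bm_len (BM (bm_col st) (Suc (bm_pos st)) \<nu> w)
    = (bm_len st)(bm_pos st := Suc (bm_len st (bm_pos st)))"
  using assms by (auto simp: bm_len_def fun_eq_iff)

lemma bm_inv_wrap:
  assumes I: "bm_inv M a st" and pos: "bm_pos st = Suc M"
  shows "bm_inv M a (bm_step M a st)"
proof -
  have "reduced_basis M a (bm_len (BM (Suc (bm_col st)) 1 (bm_ord st) (bm_vec st))) (before M 1)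
      (bm_ord st) (bm_vec st) = reduced_basis M a (bm_len st) (before M (Suc M)) (bm_ord st) (bm_vec st)"
    by (rule reduced_basis_cong) (use pos before_wrap in \<open>auto simp: bm_len_def\<close>)
  then show ?thesis using I pos by (simp add: bm_inv_def bm_step_def)
qed

lemma bm_inv_inner:
  assumes I: "bm_inv M a st" and pos: "bm_pos st \<le> M"
  shows "bm_inv M a (bm_step M a st)"
proof -
  define t where "t = bm_pos st"
  define n where "n = bm_col st"
  define \<nu> where "\<nu> = bm_ord st"
  define w where "w = bm_vec st"
  define N where "N = bm_len st"
  define N' where "N' = N(t := Suc (N t))"
  define \<delta> where "\<delta> = coeff (residual a n t (w 0)) (\<nu> 0)"
  define lc where "lc = coeff (residual a n t (w t)) (\<nu> t)"
  have t: "t \<in> {1..M}" and n1: "1 \<le> n" using I pos by (auto simp: bm_inv_def t_def n_def)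
  have B: "reduced_basis M a N (before M t) \<nu> w"
    using I by (simp add: bm_inv_def t_def \<nu>_def w_def N_def)
  have N't: "N' t = n" using n1 by (simp add: N'_def N_def bm_len_def t_def n_def)
  have inv: "bm_inv M a (BM n (Suc t) \<nu>' w')"
    if "reduced_basis M a N' (before M (Suc t)) \<nu>' w'" for \<nu>' w'
    using that t n1 bm_len_step[OF pos, of \<nu>' w'] by (simp add: bm_inv_def t_def n_def N'_def N_def)
  have step: "bm_step M a st =
    (if \<delta> = 0 then BM n (Suc t) (\<nu>(t := Suc (\<nu> t))) w
     else if \<nu> t \<le> \<nu> 0 then
       BM n (Suc t) (\<nu>(t := Suc (\<nu> t))) (w(0 := (\<lambda>i. w 0 i - monom (\<delta> / lc) (\<nu> 0 - \<nu> t) * w t i)))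
     else BM n (Suc t) (\<nu>(0 := \<nu> t, t := Suc (\<nu> 0)))
       (w(0 := (\<lambda>i. monom 1 (\<nu> t - \<nu> 0) * w 0 i - smult (\<delta> / lc) (w t i)), t := w 0)))"
    using pos by (simp add: bm_step_def Let_def t_def n_def \<nu>_def w_def \<delta>_def lc_def)
  consider "\<delta> = 0" | "\<delta> \<noteq> 0" "\<nu> t \<le> \<nu> 0" | "\<delta> \<noteq> 0" "\<nu> 0 < \<nu> t" by linarith
  then show ?thesis
  proof cases
    case 1
    then show ?thesis
      using inv[OF reduced_basis_step_keep[OF B t N'_def]] step by (simp add: N't \<delta>_def)
  next
    case 2
    then show ?thesis
      using inv[OF reduced_basis_step_elim[OF B t N'_def 2(2)]] step by (simp add: N't \<delta>_def lc_def)
  next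
    case 3
    then show ?thesis
      using inv[OF reduced_basis_step_swap[OF B t N'_def 3(2)]] step by (simp add: N't \<delta>_def lc_def)
  qed
qed

lemma bm_inv_step: "bm_inv M a st \<Longrightarrow> bm_inv M a (bm_step M a st)"
  using bm_inv_wrap bm_inv_inner by (fastforce simp: bm_inv_def not_le)

lemma bm_inv_run: "bm_inv M a (bm_run M a \<tau>)"
  by (induction \<tau>) (simp_all add: bm_inv_init bm_inv_step)

section \<open>The solution order is the linear complexity\<close>

lemma coeff_mult_seq_poly:
  fixes h :: "'a::comm_ring_1 poly"
  assumes hb: "deg_lt h (Suc L)" and k: "L < k" "k \<le> n"
  shows "coeff (h * seq_poly a m n) (n - k + L) = (\<Sum>i\<le>L. coeff h i * a (k - L + i) m)"
proof -
  define e where "e = n - k + L"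
  have Le: "L \<le> e" "e < n" using k by (auto simp: e_def)
  have "coeff (h * seq_poly a m n) e = (\<Sum>i\<le>e. coeff h i * coeff (seq_poly a m n) (e - i))"
    by (rule coeff_mult)
  also have "\<dots> = (\<Sum>i\<le>L. coeff h i * coeff (seq_poly a m n) (e - i))"
    by (rule sum.mono_neutral_right) (use Le hb in \<open>auto simp: deg_lt_def\<close>)
  also have "\<dots> = (\<Sum>i\<le>L. coeff h i * a (k - L + i) m)"
  proof (rule sum.cong)
    fix i assume i: "i \<in> {..L}"
    have "e - i < n" using Le by linarith
    moreover have "n - (e - i) = k - L + i" using i k Le unfolding e_def by auto
    ultimately show "coeff h i * coeff (seq_poly a m n) (e - i) = coeff h i * a (k - L + i) m"
      by (simp add: coeff_seq_poly)
  qed simp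
  finally show ?thesis by (simp add: e_def)
qed

lemma sum_monic_shift:
  fixes h :: "'a::comm_ring_1 poly"
  assumes hL: "coeff h L = 1" and k: "L < k"
  shows "(\<Sum>i\<le>L. coeff h i * a (k - L + i) m) = a k m + (\<Sum>r=1..L. coeff h (L - r) * a (k - r) m)"
proof -
  have "(\<Sum>i\<le>L. coeff h i * a (k - L + i) m)
      = coeff h L * a (k - L + L) m + (\<Sum>i<L. coeff h i * a (k - L + i) m)"
    by (simp add: lessThan_Suc_atMost[symmetric])
  moreover have "(\<Sum>i<L. coeff h i * a (k - L + i) m) = (\<Sum>r=1..L. coeff h (L - r) * a (k - r) m)"
    by (rule sum.reindex_bij_witness[where i="\<lambda>r. L - r" and j="\<lambda>i. L - i"]) (use k in auto)
  ultimately show ?thesis using hL k by simp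
qed

lemma coeff_residual_low:
  "e < n \<Longrightarrow> coeff (residual a n m v) e = coeff (v 0 * seq_poly a m n) e"
  by (simp add: residual_def coeff_monom_mult)

lemma solution_generates:
  fixes v :: "nat \<Rightarrow> 'a::field poly"
  assumes hL: "coeff (v 0) L = 1" and hb: "deg_lt (v 0) (Suc L)" and Vb: "deg_lt (residual a n m v) L"
    and k: "L < k" "k \<le> n"
  shows "a k m = (\<Sum>i=1..L. (- coeff (v 0) (L - i)) * a (k - i) m)"
proof -
  have "coeff (residual a n m v) (n - k + L) = 0" using Vb k by (simp add: deg_lt_def)
  moreover have "n - k + L < n" using k by simp
  ultimately have "coeff (v 0 * seq_poly a m n) (n - k + L) = 0" by (simp add: coeff_residual_low)
  then have "a k m + (\<Sum>r=1..L. coeff (v 0) (L - r) * a (k - r) m) = 0"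
    using coeff_mult_seq_poly[OF hb k, of a m] sum_monic_shift[OF hL k(1), of a m] by simp
  then show ?thesis by (simp add: sum_negf eq_neg_iff_add_eq_0)
qed

lemma residual_lincomb:
  assumes p: "\<forall>i\<le>M. v i = (\<Sum>j\<le>M. p j * w j i)" and m: "m \<le> M"
  shows "residual a n m v = (\<Sum>j\<le>M. p j * residual a n m (w j))"
proof -
  have "residual a n m v
      = (\<Sum>j\<le>M. p j * w j 0) * seq_poly a m n - monom 1 n * (\<Sum>j\<le>M. p j * w j m)"
    using p m by (simp add: residual_def)
  also have "\<dots> = (\<Sum>j\<le>M. p j * residual a n m (w j))"
    by (simp add: residual_def sum_distrib_left sum_distrib_right sum_subtractf algebra_simps)
  finally show ?thesis .
qed

definition lfsr_poly :: "nat \<Rightarrow> (nat \<Rightarrow> 'a::comm_ring_1) \<Rightarrow> 'a poly" where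
  "lfsr_poly L c = monom 1 L - (\<Sum>i=1..L. monom (c i) (L - i))"

lemma coeff_lfsr_poly: "coeff (lfsr_poly L c) j = (if j = L then 1 else if j < L then - c (L - j) else 0)"
proof -
  have "coeff (\<Sum>i=1..L. monom (c i) (L - i)) j
      = (\<Sum>i=1..L. (if i = L - j \<and> j < L then c i else 0))"
    unfolding coeff_sum coeff_monom by (intro sum.cong) auto
  also have "\<dots> = (if j < L then c (L - j) else 0)"
    by (cases "j < L") (simp_all add: sum.delta)
  finally show ?thesis by (auto simp: lfsr_poly_def coeff_monom)
qed

lemma lfsr_poly_monic: "coeff (lfsr_poly L c) L = 1" "deg_lt (lfsr_poly L c) (Suc L)"
  by (auto simp: coeff_lfsr_poly deg_lt_def)

lemma obtain_lead_index:
  fixes f :: "nat \<Rightarrow> nat"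
  assumes S: "finite S" "S \<noteq> {}" "S \<subseteq> {..M}" and t: "t \<in> {1..Suc M}"
  obtains js where "js \<in> S"
    and "\<And>j. j \<in> S \<Longrightarrow> j \<noteq> js \<Longrightarrow>
      f j < f js \<or> (f j = f js \<and> (js = 0 \<or> (j \<noteq> 0 \<and> before M t js j)))"
proof -
  define D where "D = Max (f ` S)"
  define J where "J = {j \<in> S. f j = D}"
  define r where "r j = (if j = 0 then 0 else Suc (pos_key M t j))" for j
  have D: "\<And>j. j \<in> S \<Longrightarrow> f j \<le> D" using S by (simp add: D_def)
  have "D \<in> f ` S" using S by (simp add: D_def)
  then obtain j0 where "j0 \<in> J" by (auto simp: J_def)
  then obtain js where js: "js \<in> J" "\<And>j. j \<in> J \<Longrightarrow> r js \<le> r j"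
    using ex_has_least_nat[of "\<lambda>j. j \<in> J" j0 r] by blast
  have "f j < f js \<or> (f j = f js \<and> (js = 0 \<or> (j \<noteq> 0 \<and> before M t js j)))"
    if j: "j \<in> S" "j \<noteq> js" for j
  proof (cases "j \<in> J \<and> js \<noteq> 0")
    case True
    then have "r js \<le> r j" using js(2) by blast
    then have "j \<noteq> 0" "pos_key M t js \<le> pos_key M t j"
      using True by (auto simp: r_def split: if_splits)
    moreover have "pos_key M t js \<noteq> pos_key M t j"
      using pos_key_inj[OF t, of js j] True js(1) j \<open>j \<noteq> 0\<close> S(3) by (auto simp: J_def)
    ultimately show ?thesis using True js(1) by (auto simp: J_def before_def)
  next
    case False
    then show ?thesis using D[OF j(1)] js(1) j by (auto simp: J_def le_less)
  qed
  then show thesis using that js(1) by (auto simp: J_def)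
qed

text \<open>Predictable degree property of a reduced basis: in a combination
  \<open>v = (\<Sum>j\<le>M. p j * w j)\<close> the term of maximal \<open>degree (p j) + \<nu> j\<close> cannot cancel, in \<open>v 0\<close>
  if it comes from the solution and in the residual of sequence \<open>j\<close> if it comes from pivot \<open>j\<close>.\<close>

lemma lead_term_solution:
  assumes B: "reduced_basis M a N R \<nu> w" and v0: "v 0 = (\<Sum>j\<le>M. p j * w j 0)" and p0: "p 0 \<noteq> 0"
    and dom: "\<And>j. j \<in> {1..M} \<Longrightarrow> p j \<noteq> 0 \<Longrightarrow> degree (p j) + \<nu> j \<le> degree (p 0) + \<nu> 0"
  shows "coeff (v 0) (degree (p 0) + \<nu> 0) = lead_coeff (p 0)"
proof -
  define D where "D = degree (p 0) + \<nu> 0"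
  have sol: "coeff (w 0 0) (\<nu> 0) = 1" "deg_lt (w 0 0) (Suc (\<nu> 0))"
    using B by (simp_all add: reduced_basis_def is_solution_def)
  have others: "coeff (p j * w j 0) D = 0" if j: "j \<in> {..M} - {0}" for j
  proof (cases "p j = 0")
    case False
    have "deg_lt (w j 0) (\<nu> j)" using B j by (auto simp: reduced_basis_def is_pivot_def)
    then have "deg_lt (p j * w j 0) (degree (p j) + \<nu> j)" by (rule deg_lt_mult)
    then show ?thesis using dom[OF _ False] j by (auto simp: D_def intro: deg_lt_coeff)
  qed simp
  have "coeff (v 0) D = coeff (p 0 * w 0 0) D + (\<Sum>j\<in>{..M} - {0}. coeff (p j * w j 0) D)"
    unfolding v0 coeff_sum by (rule sum.remove) auto
  also have "\<dots> = lead_coeff (p 0)"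
    using coeff_mult_top[OF p0, of "w 0 0" "\<nu> 0"] sol others by (simp add: D_def)
  finally show ?thesis by (simp add: D_def)
qed

lemma lead_term_pivot:
  assumes B: "reduced_basis M a N R \<nu> w" and p: "\<forall>i\<le>M. v i = (\<Sum>j\<le>M. p j * w j i)"
    and js: "js \<in> {1..M}" "p js \<noteq> 0"
    and dom: "\<And>j. j \<le> M \<Longrightarrow> j \<noteq> js \<Longrightarrow> p j \<noteq> 0 \<Longrightarrow>
      degree (p j) + \<nu> j < degree (p js) + \<nu> js \<or>
      (degree (p j) + \<nu> j = degree (p js) + \<nu> js \<and> j \<noteq> 0 \<and> R js j)"
  shows "coeff (residual a (N js) js v) (degree (p js) + \<nu> js - 1) \<noteq> 0"
proof -
  define D where "D = degree (p js) + \<nu> js"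
  define V where "V = residual a (N js) js"
  have sol: "deg_lt (V (w 0)) (\<nu> 0)"
    using B js by (auto simp: reduced_basis_def is_solution_def V_def)
  have piv: "\<And>j. j \<in> {1..M} \<Longrightarrow> 1 \<le> \<nu> j \<and>
      coeff (residual a (N j) j (w j)) (\<nu> j - 1) \<noteq> 0 \<and> deg_lt (V (w j)) (\<nu> j) \<and>
      (R js j \<longrightarrow> deg_lt (V (w j)) (\<nu> j - 1))"
    using B js by (auto simp: reduced_basis_def is_pivot_def V_def)
  have lead: "coeff (p js * V (w js)) (D - 1) \<noteq> 0"
  proof -
    have "deg_lt (V (w js)) (Suc (\<nu> js - 1))" using piv[OF js(1)] by simp
    then show ?thesis using coeff_mult_top[OF js(2), of "V (w js)" "\<nu> js - 1"] piv[OF js(1)] js(2)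
      by (simp add: D_def V_def)
  qed
  have others: "coeff (p j * V (w j)) (D - 1) = 0" if j: "j \<in> {..M} - {js}" for j
  proof (cases "p j = 0")
    case False
    have "deg_lt (p j * V (w j)) (D - 1)"
    proof (cases "j = 0")
      case True
      then show ?thesis
        using dom[of j] j False deg_lt_mult[OF sol, of "p j"] by (auto simp: D_def intro: deg_lt_mono)
    next
      case j0: False
      then have "j \<in> {1..M}" using j by auto
      then show ?thesis
        using dom[of j] j False piv[of j] deg_lt_mult[of "V (w j)" "\<nu> j" "p j"]
          deg_lt_mult[of "V (w j)" "\<nu> j - 1" "p j"]
        by (auto simp: D_def intro: deg_lt_mono)
    qed
    then show ?thesis by (simp add: deg_lt_coeff)
  qed simp
  have "coeff (V v) (D - 1) = (\<Sum>j\<le>M. coeff (p j * V (w j)) (D - 1))"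
    using residual_lincomb[OF p, of js] js by (simp add: V_def coeff_sum)
  also have "\<dots> = coeff (p js * V (w js)) (D - 1)
      + (\<Sum>j\<in>{..M} - {js}. coeff (p j * V (w j)) (D - 1))"
    using js by (intro sum.remove) auto
  finally show ?thesis using lead others by (simp add: V_def D_def)
qed

lemma deg_lt_lincomb_solution:
  assumes B: "reduced_basis M a N R \<nu> w" and v0: "v 0 = (\<Sum>j\<le>M. p j * w j 0)"
    and piv: "\<And>j. j \<in> {1..M} \<Longrightarrow> p j \<noteq> 0 \<Longrightarrow> degree (p j) + \<nu> j \<le> D"
    and sol: "p 0 \<noteq> 0 \<Longrightarrow> degree (p 0) + \<nu> 0 < D"
  shows "deg_lt (v 0) D"
proof -
  have "deg_lt (p j * w j 0) D" if j: "j \<le> M" for j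
  proof (cases "p j = 0")
    case False
    show ?thesis
    proof (cases "j = 0")
      case True
      have "deg_lt (w 0 0) (Suc (\<nu> 0))" using B by (simp add: reduced_basis_def is_solution_def)
      then show ?thesis
        using True sol False deg_lt_mult[of "w 0 0" "Suc (\<nu> 0)" "p 0"] by (auto intro: deg_lt_mono)
    next
      case j0: False
      then have "j \<in> {1..M}" using j by auto
      moreover from this have "deg_lt (w j 0) (\<nu> j)"
        using B by (simp add: reduced_basis_def is_pivot_def)
      ultimately show ?thesis
        using piv False deg_lt_mult[of "w j 0" "\<nu> j" "p j"] by (auto intro: deg_lt_mono)
    qed
  qed simp
  then show ?thesis unfolding v0 by (intro deg_lt_sum) auto
qed

lemma solution_order_le:
  fixes v :: "nat \<Rightarrow> 'a::field poly"
  assumes B: "reduced_basis M a N (before M t) \<nu> w" and t: "t \<in> {1..Suc M}"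
    and v: "coeff (v 0) L = 1" "deg_lt (v 0) (Suc L)"
    and res: "\<forall>m\<in>{1..M}. deg_lt (residual a (N m) m v) L"
  shows "\<nu> 0 \<le> L"
proof -
  obtain p where p: "\<forall>i\<le>M. v i = (\<Sum>j\<le>M. p j * w j i)"
    using B unfolding reduced_basis_def spans_def by blast
  define S where "S = {j \<in> {..M}. p j \<noteq> 0}"
  have "S \<noteq> {}"
  proof
    assume "S = {}"
    then have "v 0 = 0" using p by (simp add: S_def)
    then show False using v(1) by simp
  qed
  then obtain js where js: "js \<in> S" and dom: "\<And>j. j \<in> S \<Longrightarrow> j \<noteq> js \<Longrightarrow>
      degree (p j) + \<nu> j < degree (p js) + \<nu> js \<or>
      (degree (p j) + \<nu> j = degree (p js) + \<nu> js \<and> (js = 0 \<or> (j \<noteq> 0 \<and> before M t js j)))"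
    using obtain_lead_index[of S M t "\<lambda>j. degree (p j) + \<nu> j"] t by (auto simp: S_def)
  show ?thesis
  proof (cases "js = 0")
    case True
    have "degree (p j) + \<nu> j \<le> degree (p 0) + \<nu> 0" if "j \<in> {1..M}" "p j \<noteq> 0" for j
      using dom[of j] that True by (force simp: S_def)
    moreover have "v 0 = (\<Sum>j\<le>M. p j * w j 0)" "p 0 \<noteq> 0" using p js True by (auto simp: S_def)
    ultimately have "coeff (v 0) (degree (p 0) + \<nu> 0) = lead_coeff (p 0)"
      using lead_term_solution[OF B] by blast
    then have "coeff (v 0) (degree (p 0) + \<nu> 0) \<noteq> 0" using js True by (simp add: S_def)
    then have "degree (p 0) + \<nu> 0 \<le> L" using v(2) by (meson deg_lt_coeff not_less_eq_eq)
    then show ?thesis by simp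
  next
    case False
    then have js': "js \<in> {1..M}" "p js \<noteq> 0" using js by (auto simp: S_def)
    have dom': "degree (p j) + \<nu> j < degree (p js) + \<nu> js \<or>
      (degree (p j) + \<nu> j = degree (p js) + \<nu> js \<and> j \<noteq> 0 \<and> before M t js j)"
      if "j \<le> M" "j \<noteq> js" "p j \<noteq> 0" for j
      using dom[of j] that False by (auto simp: S_def)
    have "1 \<le> \<nu> js" using B js' by (auto simp: reduced_basis_def is_pivot_def)
    moreover have "degree (p js) + \<nu> js - 1 < L"
      using lead_term_pivot[OF B p js' dom'] res js' by (meson deg_lt_coeff not_less)
    moreover have "deg_lt (v 0) (degree (p js) + \<nu> js)"
    proof (rule deg_lt_lincomb_solution[OF B])
      show "v 0 = (\<Sum>j\<le>M. p j * w j 0)" using p by simp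
      show "degree (p j) + \<nu> j \<le> degree (p js) + \<nu> js" if "j \<in> {1..M}" "p j \<noteq> 0" for j
        using dom'[of j] that by (cases "j = js") auto
      show "degree (p 0) + \<nu> 0 < degree (p js) + \<nu> js" if "p 0 \<noteq> 0"
        using dom'[of 0] that False by auto
    qed
    ultimately have "coeff (v 0) L = 0" by (simp add: deg_lt_coeff)
    then show ?thesis using v(1) by simp
  qed
qed

text \<open>\<open>v m\<close> is the quotient of \<open>h * seq_poly a m n\<close> by \<open>X ^ n\<close>, so the residual is the
  remainder, whose coefficients from \<open>L\<close> on vanish by the recurrence.\<close>

lemma residual_lfsr_poly:
  fixes c :: "nat \<Rightarrow> 'a::comm_ring_1" and L :: nat
  defines "h \<equiv> lfsr_poly L c"
  assumes c: "\<And>k. L < k \<Longrightarrow> k \<le> n \<Longrightarrow> a k m = (\<Sum>i=1..L. c i * a (k - i) m)" and m: "m \<noteq> 0"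
  shows "deg_lt (residual a n m (\<lambda>i. if i = 0 then h else poly_shift n (h * seq_poly a i n))) L"
  unfolding deg_lt_def
proof (intro allI impI)
  fix e assume e: "L \<le> e"
  define v where "v i = (if i = 0 then h else poly_shift n (h * seq_poly a i n))" for i
  show "coeff (residual a n m v) e = 0"
  proof (cases "e < n")
    case True
    define k where "k = n - e + L"
    have k: "L < k" "k \<le> n" "e = n - k + L" using True e by (auto simp: k_def)
    have "coeff (residual a n m v) e = coeff (h * seq_poly a m n) (n - k + L)"
      using True k by (simp add: coeff_residual_low v_def)
    also have "\<dots> = a k m + (\<Sum>r=1..L. coeff h (L - r) * a (k - r) m)"
      using coeff_mult_seq_poly[OF lfsr_poly_monic(2) k(1,2), of c a m]
        sum_monic_shift[OF lfsr_poly_monic(1) k(1), of c a m]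
      by (simp add: h_def)
    also have "(\<Sum>r=1..L. coeff h (L - r) * a (k - r) m) = - (\<Sum>r=1..L. c r * a (k - r) m)"
      unfolding sum_negf[symmetric] by (intro sum.cong) (auto simp: h_def coeff_lfsr_poly)
    also have "a k m = (\<Sum>r=1..L. c r * a (k - r) m)" using c[OF k(1,2)] .
    finally show ?thesis by simp
  next
    case False
    then show ?thesis using m by (simp add: v_def residual_def coeff_monom_mult coeff_poly_shift)
  qed
qed

lemma lin_compl_eq_order:
  fixes a :: "nat \<Rightarrow> nat \<Rightarrow> 'a::field"
  assumes B: "reduced_basis M a N (before M t) \<nu> w" and t: "t \<in> {1..Suc M}"
    and N: "\<And>m. m \<in> {1..M} \<Longrightarrow> N m = n"
  shows "lin_compl M a n = \<nu> 0"
proof -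
  have sol: "coeff (w 0 0) (\<nu> 0) = 1" "deg_lt (w 0 0) (Suc (\<nu> 0))"
    "\<And>m. m \<in> {1..M} \<Longrightarrow> deg_lt (residual a n m (w 0)) (\<nu> 0)"
    using B N by (auto simp: reduced_basis_def is_solution_def)
  let ?P = "\<lambda>L. \<exists>c :: nat \<Rightarrow> 'a. \<forall>k m. L < k \<and> k \<le> n \<and> 1 \<le> m \<and> m \<le> M \<longrightarrow>
        a k m = (\<Sum>i=1..L. c i * a (k - i) m)"
  have "?P (\<nu> 0)"
    using solution_generates[OF sol(1,2) sol(3)]
    by (intro exI[of _ "\<lambda>i. - coeff (w 0 0) (\<nu> 0 - i)"]) auto
  moreover have "\<nu> 0 \<le> L" if "?P L" for L
  proof -
    obtain c where c: "\<And>k m. L < k \<Longrightarrow> k \<le> n \<Longrightarrow> 1 \<le> m \<Longrightarrow> m \<le> M \<Longrightarrow>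
        a k m = (\<Sum>i=1..L. c i * a (k - i) m)"
      using \<open>?P L\<close> by blast
    define v where "v i = (if i = 0 then lfsr_poly L c else poly_shift n (lfsr_poly L c * seq_poly a i n))"
      for i
    have "deg_lt (residual a (N m) m v) L" if "m \<in> {1..M}" for m
      using residual_lfsr_poly[where L = L and c = c and a = a and n = n and m = m] c that N[OF that]
      by (auto simp: v_def[abs_def])
    then show ?thesis
      using solution_order_le[OF B t, of v L] lfsr_poly_monic[of L c] by (simp add: v_def)
  qed
  ultimately show ?thesis unfolding lin_compl_def by (intro Least_equality) auto
qed

section \<open>The BDM as the image of the algorithm\<close>

text \<open>At column \<open>c\<close> the deviation component is \<open>d = \<nu> 0 - \<lceil>c M / (M + 1)\<rceil>\<close>
  (see \<open>ceiling_mult_div\<close>), and \<open>b_m = \<nu> m - N m - 1 + \<lfloor>c / (M + 1)\<rfloor>\<close>.\<close>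

definition bdm_of :: "nat \<Rightarrow> 'a poly bm \<Rightarrow> bdm_state" where
  "bdm_of M st =
    (map (\<lambda>m. int (bm_ord st m) - int (bm_len st m) - 1 + int (bm_col st div Suc M)) [1..<Suc M],
     int (bm_ord st 0) - int (bm_col st - bm_col st div Suc M), int (bm_col st mod Suc M), bm_pos st)"

lemma ceiling_mult_div: "\<lceil>real (n * M) / real (M + 1)\<rceil> = int (n - n div Suc M)"
proof -
  have "real (n * M) / real (M + 1) = of_int (int (n * M)) / of_int (int (M + 1))" by simp
  then have "\<lceil>real (n * M) / real (M + 1)\<rceil> = - (- int (n * M) div int (M + 1))"
    by (simp only: ceiling_divide_eq_div)
  also have "- int (n * M) = int n + (- int n) * int (M + 1)" by (simp add: algebra_simps)
  also have "(int n + (- int n) * int (M + 1)) div int (M + 1) = - int n + int n div int (M + 1)"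
    by (subst div_mult_self1) simp_all
  also have "int n div int (M + 1) = int (n div Suc M)" by (simp add: zdiv_int)
  finally show ?thesis by (simp add: of_nat_diff div_le_dividend)
qed

lemma bdm_of_in_states:
  assumes I: "bm_inv M a st"
  shows "bdm_of M st \<in> bdm_states M"
proof -
  define n where "n = bm_col st"
  define Q where "Q = n div Suc M"
  have sum: "int (bm_ord st 0) + (\<Sum>m=1..M. int (bm_ord st m)) = (\<Sum>m=1..M. int (bm_len st m)) + int M"
  proof -
    have "(\<Sum>j\<le>M. bm_ord st j) = (\<Sum>m=1..M. bm_len st m) + M"
      using I by (simp add: bm_inv_def reduced_basis_def)
    moreover have "{..M} = insert 0 {1..M}" by auto
    ultimately show ?thesis by (simp flip: of_nat_sum)
  qed
  have "sum_list (map (\<lambda>m. int (bm_ord st m) - int (bm_len st m) - 1 + int Q) [1..<Suc M])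
      = (\<Sum>m=1..M. int (bm_ord st m)) - (\<Sum>m=1..M. int (bm_len st m)) - int M + int M * int Q"
    by (simp add: sum_set_upt_conv_sum_list_nat[symmetric] atLeastLessThanSuc_atLeastAtMost
        sum.distrib sum_subtractf del: upt_Suc)
  moreover have "int n = int (Suc M) * int Q + int (n mod Suc M)"
    unfolding Q_def by (metis of_nat_add of_nat_mult mult_div_mod_eq)
  ultimately have "int (bm_ord st 0) - int (n - Q) + int (n mod Suc M)
      + sum_list (map (\<lambda>m. int (bm_ord st m) - int (bm_len st m) - 1 + int Q) [1..<Suc M]) = 0"
    using sum by (simp add: Q_def of_nat_diff div_le_dividend algebra_simps)
  moreover have "1 \<le> bm_pos st" "bm_pos st \<le> Suc M" using I by (auto simp: bm_inv_def)
  moreover have "n mod Suc M \<le> M" using mod_less_divisor[of "Suc M" n] by simp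
  ultimately show ?thesis
    unfolding bdm_states_def aug_states_def bdm_of_def n_def[symmetric] Q_def[symmetric]
    by (simp del: upt_Suc)
qed

lemma map_pmf_uniform_eq_zero:
  fixes c :: "'a::{finite,field}"
  shows "map_pmf (\<lambda>x. c + x = 0) (pmf_of_set UNIV) = bernoulli_pmf (1 / real CARD('a))"
proof (rule pmf_eqI)
  fix b :: bool
  have q: "CARD('a) \<ge> 1" by (simp add: Suc_leI)
  have "{x::'a. c + x = 0} = {- c}" "{x::'a. c + x \<noteq> 0} = UNIV - {- c}"
    by (auto simp: add_eq_0_iff)
  then have "pmf (map_pmf (\<lambda>x. c + x = 0) (pmf_of_set UNIV)) b
      = (if b then 1 else real CARD('a) - 1) / CARD('a)"
    using q by (cases b) (simp_all add: pmf_map measure_pmf_of_set vimage_def card_Diff_subset of_nat_diff)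
  then show "pmf (map_pmf (\<lambda>x. c + x = 0) (pmf_of_set UNIV)) b = pmf (bernoulli_pmf (1 / real CARD('a))) b"
    using q by (simp add: diff_divide_distrib)
qed

lemma bm_step_col_pos:
  "bm_col (bm_step M a st) = (if bm_pos st \<le> M then bm_col st else Suc (bm_col st))"
  "bm_pos (bm_step M a st) = (if bm_pos st \<le> M then Suc (bm_pos st) else 1)"
  unfolding bm_step_def Let_def by auto

lemma bm_step_ord:
  assumes "bm_pos st \<le> M"
  shows "bm_ord (bm_step M a st) =
    (if coeff (residual a (bm_col st) (bm_pos st) (bm_vec st 0)) (bm_ord st 0) \<noteq> 0 \<and>
        bm_ord st 0 < bm_ord st (bm_pos st)
     then (bm_ord st)(0 := bm_ord st (bm_pos st), bm_pos st := Suc (bm_ord st 0))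
     else (bm_ord st)(bm_pos st := Suc (bm_ord st (bm_pos st))))"
  using assms unfolding bm_step_def Let_def by auto

lemma discrepancy_update:
  assumes "1 \<le> n" and "coeff (v 0) e = 1"
  shows "coeff (residual (a(n := (a n)(t := x))) n t v) e
    = coeff (pCons 0 (residual a (n - 1) t v)) e + x"
proof -
  define a' where "a' = a(n := (a n)(t := x))"
  have "seq_poly a' t (n - 1) = seq_poly a t (n - 1)" by (rule seq_poly_cong) (auto simp: a'_def)
  then have "residual a' (n - 1) t v = residual a (n - 1) t v" by (simp add: residual_def)
  moreover have "residual a' n t v = pCons 0 (residual a' (n - 1) t v) + smult (a' n t) (v 0)"
    using residual_Suc[of a' "n - 1" t v] assms(1) by simp
  ultimately show ?thesis using assms(2) by (simp add: a'_def)
qed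

lemma bdm_of_step:
  assumes pos: "1 \<le> bm_pos st" "bm_pos st \<le> M" and col: "1 \<le> bm_col st"
    and s: "bdm_of M st = (b, d, T, t)"
  shows "bdm_of M (bm_step M a st) =
    (if coeff (residual a (bm_col st) t (bm_vec st 0)) (bm_ord st 0) \<noteq> 0 \<and> d < b ! (t - 1)
     then (b[t - 1 := d], b ! (t - 1), T, Suc t) else (b, d, T, Suc t))"
proof -
  define n where "n = bm_col st"
  define Q where "Q = n div Suc M"
  define \<nu> where "\<nu> = bm_ord st"
  define \<nu>' where "\<nu>' = bm_ord (bm_step M a st)"
  have t: "t = bm_pos st" using s by (simp add: bdm_of_def)
  have Qn: "Q \<le> n" by (simp add: Q_def)
  have len: "bm_len st m = (if m < t then n else n - 1)" for m by (simp add: bm_len_def t n_def)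
  have b: "b = map (\<lambda>m. int (\<nu> m) - int (bm_len st m) - 1 + int Q) [1..<Suc M]"
    and d: "d = int (\<nu> 0) - int (n - Q)" and T: "T = int (n mod Suc M)"
    using s by (simp_all add: bdm_of_def Q_def n_def \<nu>_def)
  have bt: "b ! (t - 1) = int (\<nu> t) - int (n - Q)"
    using pos col Qn by (simp add: b t nth_map_upt len n_def of_nat_diff del: upt_Suc)
  have new: "bdm_of M (bm_step M a st) =
      (map (\<lambda>m. int (\<nu>' m) - int (if m < Suc t then n else n - 1) - 1 + int Q) [1..<Suc M],
       int (\<nu>' 0) - int (n - Q), T, Suc t)"
    using pos by (simp add: bdm_of_def bm_len_def bm_step_col_pos \<nu>'_def t n_def Q_def T del: upt_Suc)
  show ?thesis
  proof (cases "coeff (residual a n t (bm_vec st 0)) (\<nu> 0) \<noteq> 0 \<and> \<nu> 0 < \<nu> t")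
    case True
    then have "coeff (residual a (bm_col st) (bm_pos st) (bm_vec st 0)) (bm_ord st 0) \<noteq> 0 \<and>
        bm_ord st 0 < bm_ord st (bm_pos st)"
      by (simp add: n_def \<nu>_def t)
    then have \<nu>': "\<nu>' = \<nu>(0 := \<nu> t, t := Suc (\<nu> 0))"
      by (simp only: \<nu>'_def bm_step_ord[OF pos(2)] if_True) (simp add: \<nu>_def t)
    have "map (\<lambda>m. int (\<nu>' m) - int (if m < Suc t then n else n - 1) - 1 + int Q) [1..<Suc M]
        = b[t - 1 := d]"
      by (rule nth_equalityI)
        (use pos col Qn in \<open>auto simp: b d \<nu>' t len nth_map_upt nth_list_update simp del: upt_Suc\<close>)
    then show ?thesis using True new bt d \<nu>' pos by (simp add: n_def \<nu>_def t)
  next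
    case False
    then have "\<not> (coeff (residual a (bm_col st) (bm_pos st) (bm_vec st 0)) (bm_ord st 0) \<noteq> 0 \<and>
        bm_ord st 0 < bm_ord st (bm_pos st))"
      by (simp add: n_def \<nu>_def t)
    then have \<nu>': "\<nu>' = \<nu>(t := Suc (\<nu> t))"
      by (simp only: \<nu>'_def bm_step_ord[OF pos(2)] if_False) (simp add: \<nu>_def t)
    have "map (\<lambda>m. int (\<nu>' m) - int (if m < Suc t then n else n - 1) - 1 + int Q) [1..<Suc M] = b"
      unfolding b using col by (intro map_cong) (auto simp: \<nu>' len n_def less_Suc_eq simp del: upt_Suc)
    moreover have "\<nu>' 0 = \<nu> 0" using pos by (simp add: \<nu>' t)
    ultimately show ?thesis using False new bt d by (auto simp: n_def \<nu>_def t)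
  qed
qed

lemma bdm_step_inner:
  fixes a :: "nat \<Rightarrow> nat \<Rightarrow> 'a::{finite,field}"
  assumes I: "bm_inv M a st" and pos: "bm_pos st \<le> M"
  shows "map_pmf (\<lambda>x. bdm_of M (bm_step M (a(bm_col st := (a (bm_col st))(bm_pos st := x))) st))
      (pmf_of_set UNIV) = bdm_step CARD('a) M (bdm_of M st)"
proof -
  define n where "n = bm_col st"
  define e where "e = bm_ord st 0"
  have pos1: "1 \<le> bm_pos st" and n1: "1 \<le> n" using I pos by (auto simp: bm_inv_def n_def)
  have w0: "coeff (bm_vec st 0 0) e = 1"
    using I by (simp add: bm_inv_def reduced_basis_def is_solution_def e_def)
  obtain b d T t where s: "bdm_of M st = (b, d, T, t)" by (metis prod_cases4)
  have t: "t = bm_pos st" using s by (simp add: bdm_of_def)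
  define c where "c = coeff (pCons 0 (residual a (n - 1) t (bm_vec st 0))) e"
  define sA where "sA = (b, d, T, Suc t)"
  define sC where "sC = (b[t - 1 := d], b ! (t - 1), T, Suc t)"
  have step: "bdm_of M (bm_step M (a(n := (a n)(t := x))) st)
      = (if c + x \<noteq> 0 \<and> d < b ! (t - 1) then sC else sA)" for x
    using bdm_of_step[OF pos1 pos _ s] n1
      discrepancy_update[where v = "bm_vec st 0", OF n1 w0, of a t x]
    by (simp add: n_def e_def c_def sA_def sC_def)
  show ?thesis
  proof (cases "d < b ! (t - 1)")
    case True
    have "(\<lambda>x. bdm_of M (bm_step M (a(n := (a n)(t := x))) st))
        = (\<lambda>z. if z then sA else sC) \<circ> (\<lambda>x. c + x = 0)"
      using True by (auto simp: step)
    then have "map_pmf (\<lambda>x. bdm_of M (bm_step M (a(n := (a n)(t := x))) st)) (pmf_of_set UNIV)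
        = map_pmf (\<lambda>z. if z then sA else sC) (map_pmf (\<lambda>x. c + x = 0) (pmf_of_set UNIV))"
      by (simp add: pmf.map_comp)
    also have "\<dots> = bdm_step CARD('a) M (bdm_of M st)"
      using True pos1 pos unfolding map_pmf_uniform_eq_zero sA_def sC_def t Suc_eq_plus1[of "bm_pos st"]
      by (simp add: s t bdm_step_def)
    finally show ?thesis by (simp add: n_def t)
  next
    case False
    then have "(\<lambda>x. bdm_of M (bm_step M (a(n := (a n)(t := x))) st)) = (\<lambda>_. sA)"
      by (simp add: step)
    then show ?thesis
      using False pos1 pos unfolding sA_def t Suc_eq_plus1[of "bm_pos st"]
      by (simp add: n_def t[symmetric] s bdm_step_def)
  qed
qed

lemma bdm_step_wrap:
  assumes pos: "bm_pos st = Suc M"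
  shows "bdm_step q M (bdm_of M st) = return_pmf (bdm_of M (bm_step M a st))"
proof -
  define n where "n = bm_col st"
  define Q where "Q = n div Suc M"
  have st': "bm_step M a st = BM (Suc n) 1 (bm_ord st) (bm_vec st)"
    using pos by (simp add: bm_step_def n_def)
  have len: "bm_len (BM (Suc n) 1 \<nu> w) m = bm_len st m" if "1 \<le> m" "m \<le> M" for m \<nu> w
    using that pos by (simp add: bm_len_def n_def)
  have b: "map (\<lambda>m. int (bm_ord st m) - int (bm_len (BM (Suc n) 1 (bm_ord st) (bm_vec st)) m)
        - 1 + int k) [1..<Suc M]
      = map (\<lambda>m. int (bm_ord st m) - int (bm_len st m) - 1 + int k) [1..<Suc M]" for k
    using len by (intro map_cong) auto
  show ?thesis
  proof (cases "n mod Suc M = M")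
    case False
    then have "n mod Suc M < M" using mod_less_divisor[of "Suc M" n] by linarith
    then have "Suc n div Suc M = Q" "Suc n mod Suc M = Suc (n mod Suc M)"
      using False by (simp_all add: div_Suc mod_Suc Q_def)
    then show ?thesis using \<open>n mod Suc M < M\<close> pos b[of Q] div_le_dividend[of n "Suc M"]
      unfolding st' bdm_of_def
      by (simp add: bdm_step_def n_def[symmetric] Q_def[symmetric] of_nat_diff div_le_dividend
          del: upt_Suc)
  next
    case True
    then have "Suc n div Suc M = Suc Q" "Suc n mod Suc M = 0"
      by (simp_all add: div_Suc mod_Suc Q_def)
    moreover have "map (\<lambda>m. int (bm_ord st m) - int (bm_len st m) - 1 + int (Suc Q)) [1..<Suc M]
        = map (\<lambda>x. x + 1) (map (\<lambda>m. int (bm_ord st m) - int (bm_len st m) - 1 + int Q) [1..<Suc M])"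
      by simp
    ultimately show ?thesis using True pos b[of "Suc Q"]
      unfolding st' bdm_of_def
      by (simp add: bdm_step_def n_def[symmetric] Q_def[symmetric] of_nat_diff div_le_dividend
          del: upt_Suc)
  qed
qed

section \<open>The distribution of the BDM\<close>

definition clock_col :: "nat \<Rightarrow> nat \<Rightarrow> nat" where
  "clock_col M \<tau> = (\<tau> + M) div Suc M"

definition clock_pos :: "nat \<Rightarrow> nat \<Rightarrow> nat" where
  "clock_pos M \<tau> = Suc ((\<tau> + M) mod Suc M)"

lemma clock_Suc:
  "clock_col M (Suc \<tau>) = (if clock_pos M \<tau> \<le> M then clock_col M \<tau> else Suc (clock_col M \<tau>))"
  "clock_pos M (Suc \<tau>) = (if clock_pos M \<tau> \<le> M then Suc (clock_pos M \<tau>) else 1)"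
proof -
  have "(\<tau> + M) mod Suc M \<le> M" using mod_less_divisor[of "Suc M" "\<tau> + M"] by linarith
  then show "clock_col M (Suc \<tau>) = (if clock_pos M \<tau> \<le> M then clock_col M \<tau> else Suc (clock_col M \<tau>))"
    "clock_pos M (Suc \<tau>) = (if clock_pos M \<tau> \<le> M then Suc (clock_pos M \<tau>) else 1)"
    unfolding clock_col_def clock_pos_def by (auto simp: div_Suc mod_Suc le_less)
qed

lemma bm_run_clock:
  "bm_col (bm_run M a \<tau>) = clock_col M \<tau> \<and> bm_pos (bm_run M a \<tau>) = clock_pos M \<tau>"
proof (induction \<tau>)
  case 0
  then show ?case by (simp add: bm_init_def clock_col_def clock_pos_def)
next
  case (Suc \<tau>)
  then show ?case by (simp add: bm_step_col_pos clock_Suc)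
qed

lemma clock_block: "clock_col M (Suc M * n) = n" "clock_pos M (Suc M * n) = Suc M"
proof -
  have e: "Suc M * n + M = M + n * Suc M" by simp
  show "clock_col M (Suc M * n) = n"
    unfolding clock_col_def e by (simp only: div_mult_self1[OF nat.distinct(2)]) simp
  show "clock_pos M (Suc M * n) = Suc M"
    unfolding clock_pos_def e by (simp only: mod_mult_self1) simp
qed

text \<open>The terms read before the algorithm reaches column \<open>c\<close> and position \<open>t\<close>.\<close>

definition processed :: "nat \<Rightarrow> nat \<Rightarrow> nat \<Rightarrow> nat \<Rightarrow> nat \<Rightarrow> bool" where
  "processed M c t k m \<longleftrightarrow> 1 \<le> m \<and> m \<le> M \<and> 1 \<le> k \<and> (k < c \<or> (k = c \<and> m < t))"

definition processed_prefixes :: "nat \<Rightarrow> nat \<Rightarrow> nat \<Rightarrow> (nat \<Rightarrow> nat \<Rightarrow> 'a::zero) set" where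
  "processed_prefixes M c t = {a. \<forall>k m. \<not> processed M c t k m \<longrightarrow> a k m = 0}"

definition processed_idx :: "nat \<Rightarrow> nat \<Rightarrow> nat \<Rightarrow> (nat \<times> nat) set" where
  "processed_idx M c t = {(k, m). processed M c t k m}"

lemma finite_processed_idx: "finite (processed_idx M c t)"
proof -
  have "processed_idx M c t \<subseteq> {..c} \<times> {..M}" by (auto simp: processed_idx_def processed_def)
  then show ?thesis by (rule finite_subset) auto
qed

lemma bij_betw_processed_prefixes:
  "bij_betw (\<lambda>f k m. if (k, m) \<in> processed_idx M c t then f (k, m) else 0)
     (processed_idx M c t \<rightarrow>\<^sub>E UNIV) (processed_prefixes M c t :: (nat \<Rightarrow> nat \<Rightarrow> 'a::zero) set)"
proof (rule bij_betw_byWitness[where f' = "\<lambda>a. restrict (case_prod a) (processed_idx M c t)"])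
  show "\<forall>f\<in>processed_idx M c t \<rightarrow>\<^sub>E UNIV.
      restrict (\<lambda>(k, m). if (k, m) \<in> processed_idx M c t then f (k, m) else 0) (processed_idx M c t) = f"
    by (auto intro: PiE_ext)
  show "(\<lambda>a. restrict (case_prod a) (processed_idx M c t)) ` processed_prefixes M c t
      \<subseteq> processed_idx M c t \<rightarrow>\<^sub>E UNIV"
    by auto
qed (auto simp: processed_prefixes_def processed_idx_def fun_eq_iff)

lemma finite_processed_prefixes:
  "finite (processed_prefixes M c t :: (nat \<Rightarrow> nat \<Rightarrow> 'a::{finite,zero}) set)"
  using bij_betw_finite[OF bij_betw_processed_prefixes[where 'a='a, of M c t]] finite_processed_idx
  by (simp add: finite_PiE)

lemma card_processed_prefixes:
  "card (processed_prefixes M c t :: (nat \<Rightarrow> nat \<Rightarrow> 'a::{finite,zero}) set)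
    = CARD('a) ^ card (processed_idx M c t)"
  using bij_betw_same_card[OF bij_betw_processed_prefixes[where 'a='a, of M c t]] finite_processed_idx
  by (simp add: card_PiE)

lemma prefixes_eq_processed: "prefixes M n = processed_prefixes M n (Suc M)"
  unfolding prefixes_def processed_prefixes_def processed_def by (rule Collect_cong) (auto simp: le_less)

lemma card_prefixes: "card (prefixes M n :: (nat \<Rightarrow> nat \<Rightarrow> 'a::{finite,zero}) set) = CARD('a) ^ (M * n)"
proof -
  have "processed_idx M n (Suc M) = {1..n} \<times> {1..M}" by (auto simp: processed_idx_def processed_def)
  then show ?thesis by (simp add: prefixes_eq_processed card_processed_prefixes mult.commute)
qed

lemma processed_prefixes_wrap: "processed_prefixes M (Suc c) (Suc 0) = processed_prefixes M c (Suc M)"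
  unfolding processed_prefixes_def processed_def by auto

lemma bm_step_cong:
  assumes "\<And>k. 1 \<le> k \<Longrightarrow> k \<le> bm_col st \<Longrightarrow> a k (bm_pos st) = a' k (bm_pos st)"
  shows "bm_step M a st = bm_step M a' st"
proof -
  have "seq_poly a (bm_pos st) (bm_col st) = seq_poly a' (bm_pos st) (bm_col st)"
    by (rule seq_poly_cong) (use assms in auto)
  then have "residual a (bm_col st) (bm_pos st) = residual a' (bm_col st) (bm_pos st)"
    by (simp add: residual_def fun_eq_iff)
  then show ?thesis unfolding bm_step_def by simp
qed

lemma bm_run_cong:
  fixes a a' :: "nat \<Rightarrow> nat \<Rightarrow> 'a::field"
  assumes "\<And>k m. processed M (clock_col M \<tau>) (clock_pos M \<tau>) k m \<Longrightarrow> a k m = a' k m"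
  shows "bm_run M a \<tau> = bm_run M a' \<tau>"
  using assms
proof (induction \<tau>)
  case (Suc \<tau>)
  have "processed M (clock_col M (Suc \<tau>)) (clock_pos M (Suc \<tau>)) k m"
    if "processed M (clock_col M \<tau>) (clock_pos M \<tau>) k m" for k m
    using that by (auto simp: processed_def clock_Suc)
  then have eq: "bm_run M a \<tau> = bm_run M a' \<tau>" using Suc by blast
  show ?case
  proof (cases "clock_pos M \<tau> \<le> M")
    case True
    have "1 \<le> clock_pos M \<tau>" by (simp add: clock_pos_def)
    then have "a k (bm_pos (bm_run M a \<tau>)) = a' k (bm_pos (bm_run M a \<tau>))"
      if "1 \<le> k" "k \<le> bm_col (bm_run M a \<tau>)" for k
      using Suc.prems[of k "clock_pos M \<tau>"] that True
      by (auto simp: bm_run_clock processed_def clock_Suc le_less)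
    then show ?thesis using eq by (simp add: bm_step_cong[of "bm_run M a' \<tau>" a a'])
  next
    case False
    then show ?thesis using eq by (simp add: bm_step_def bm_run_clock)
  qed
qed simp

lemma processed_prefixes_Suc:
  assumes t: "1 \<le> t" "t \<le> M" and c: "1 \<le> c"
  shows "processed_prefixes M c (Suc t)
    = (\<Union>a\<in>processed_prefixes M c t. range (\<lambda>x. a(c := (a c)(t := x))))"
proof (intro equalityI subsetI)
  fix a' assume a': "a' \<in> processed_prefixes M c (Suc t)"
  define a where "a = a'(c := (a' c)(t := 0))"
  have "a \<in> processed_prefixes M c t"
    using a' by (auto simp: a_def processed_prefixes_def processed_def less_Suc_eq)
  moreover have "a' = a(c := (a c)(t := a' c t))" by (auto simp: a_def fun_eq_iff)
  ultimately show "a' \<in> (\<Union>a\<in>processed_prefixes M c t. range (\<lambda>x. a(c := (a c)(t := x))))" by blast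
qed (use t c in \<open>auto simp: processed_prefixes_def processed_def less_Suc_eq\<close>)

lemma disjoint_family_processed_prefixes:
  "disjoint_family_on (\<lambda>a. range (\<lambda>x. a(c := (a c)(t := x)))) (processed_prefixes M c t)"
  unfolding disjoint_family_on_def
proof (intro ballI impI)
  fix a b :: "nat \<Rightarrow> nat \<Rightarrow> 'a"
  assume ab: "a \<in> processed_prefixes M c t" "b \<in> processed_prefixes M c t" "a \<noteq> b"
  have "a c t = 0" "b c t = 0" using ab(1,2) by (auto simp: processed_prefixes_def processed_def)
  then have "a = b" if "a(c := (a c)(t := x)) = b(c := (b c)(t := y))" for x y
    using that by (auto simp: fun_eq_iff split: if_splits) metis
  then show "range (\<lambda>x. a(c := (a c)(t := x))) \<inter> range (\<lambda>x. b(c := (b c)(t := x))) = {}"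
    using ab(3) by blast
qed

lemma pmf_of_processed_prefixes_Suc:
  assumes t: "1 \<le> t" "t \<le> M" and c: "1 \<le> c"
  shows "bind_pmf (pmf_of_set (processed_prefixes M c t))
      (\<lambda>a. map_pmf (\<lambda>x. a(c := (a c)(t := x))) (pmf_of_set (UNIV :: 'a::{finite,zero} set)))
    = pmf_of_set (processed_prefixes M c (Suc t))"
proof -
  define P where "P = (processed_prefixes M c t :: (nat \<Rightarrow> nat \<Rightarrow> 'a) set)"
  define upd where "upd a = (\<lambda>x. a(c := (a c)(t := x)))" for a :: "nat \<Rightarrow> nat \<Rightarrow> 'a"
  have inj: "inj (upd a)" for a
    by (rule injI) (metis fun_upd_same upd_def)
  have P: "finite P" "P \<noteq> {}"
    using finite_processed_prefixes[where 'a='a] by (auto simp: P_def processed_prefixes_def)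
  have "bind_pmf (pmf_of_set P) (\<lambda>a. map_pmf (upd a) (pmf_of_set UNIV))
      = bind_pmf (pmf_of_set P) (\<lambda>a. pmf_of_set (range (upd a)))"
    using inj by (simp add: map_pmf_of_set_inj)
  also have "\<dots> = pmf_of_set (\<Union>a\<in>P. range (upd a))"
  proof (rule pmf_of_set_UN[symmetric])
    show "card (range (upd a)) = CARD('a)" for a using card_image[OF inj[of a]] by simp
    show "disjoint_family_on (\<lambda>a. range (upd a)) P"
      using disjoint_family_processed_prefixes[where 'a='a] by (simp add: upd_def P_def)
  qed (use P in auto)
  also have "(\<Union>a\<in>P. range (upd a)) = processed_prefixes M c (Suc t)"
    using processed_prefixes_Suc[where 'a='a, OF t c] by (simp add: P_def upd_def)
  finally show ?thesis by (simp only: P_def upd_def)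
qed

lemma bdm_step_bm_run:
  fixes a :: "nat \<Rightarrow> nat \<Rightarrow> 'a::{finite,field}" and M \<tau> :: nat
  defines "c \<equiv> clock_col M \<tau>" and "t \<equiv> clock_pos M \<tau>"
  assumes t: "t \<le> M"
  shows "bdm_step CARD('a) M (bdm_of M (bm_run M a \<tau>))
    = map_pmf (\<lambda>x. bdm_of M (bm_run M (a(c := (a c)(t := x))) (Suc \<tau>))) (pmf_of_set UNIV)"
proof -
  have "bm_run M (a(c := (a c)(t := x))) \<tau> = bm_run M a \<tau>" for x
    by (rule bm_run_cong) (auto simp: processed_def c_def t_def)
  then show ?thesis
    using bdm_step_inner[OF bm_inv_run[of M a \<tau>]] bm_run_clock[of M a \<tau>] t
    by (simp add: c_def t_def)
qed

lemma bind_bdm_step_inner: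
  fixes M \<tau> :: nat
  defines "c \<equiv> clock_col M \<tau>" and "t \<equiv> clock_pos M \<tau>"
  assumes t: "t \<le> M"
  shows "bind_pmf (pmf_of_set (processed_prefixes M c t))
      (\<lambda>a :: nat \<Rightarrow> nat \<Rightarrow> 'a::{finite,field}. bdm_step CARD('a) M (bdm_of M (bm_run M a \<tau>)))
    = map_pmf (\<lambda>a :: nat \<Rightarrow> nat \<Rightarrow> 'a. bdm_of M (bm_run M a (Suc \<tau>)))
      (pmf_of_set (processed_prefixes M (clock_col M (Suc \<tau>)) (clock_pos M (Suc \<tau>))))"
proof -
  define P where "P = (processed_prefixes M c t :: (nat \<Rightarrow> nat \<Rightarrow> 'a) set)"
  have c1: "1 \<le> c"
    using bm_inv_run[of M "\<lambda>_ _. 0::'a" \<tau>] bm_run_clock[of M "\<lambda>_ _. 0::'a" \<tau>] t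
    by (simp add: bm_inv_def c_def t_def)
  have "bind_pmf (pmf_of_set P) (\<lambda>a. bdm_step CARD('a) M (bdm_of M (bm_run M a \<tau>)))
      = bind_pmf (pmf_of_set P) (\<lambda>a. map_pmf (\<lambda>a. bdm_of M (bm_run M a (Suc \<tau>)))
          (map_pmf (\<lambda>x. a(c := (a c)(t := x))) (pmf_of_set UNIV)))"
    using t unfolding c_def t_def by (simp only: bdm_step_bm_run pmf.map_comp o_def)
  also have "\<dots> = map_pmf (\<lambda>a. bdm_of M (bm_run M a (Suc \<tau>)))
      (bind_pmf (pmf_of_set P) (\<lambda>a. map_pmf (\<lambda>x. a(c := (a c)(t := x))) (pmf_of_set UNIV)))"
    by (simp only: map_bind_pmf)
  also have "bind_pmf (pmf_of_set P) (\<lambda>a. map_pmf (\<lambda>x. a(c := (a c)(t := x))) (pmf_of_set UNIV))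
      = pmf_of_set (processed_prefixes M c (Suc t))"
    unfolding P_def using t c1 by (intro pmf_of_processed_prefixes_Suc) (auto simp: t_def clock_pos_def)
  finally show ?thesis using t by (simp add: clock_Suc c_def t_def P_def)
qed

lemma bind_bdm_step_wrap:
  fixes M \<tau> :: nat
  assumes "\<not> clock_pos M \<tau> \<le> M"
  shows "bind_pmf (pmf_of_set (processed_prefixes M (clock_col M \<tau>) (clock_pos M \<tau>)))
      (\<lambda>a :: nat \<Rightarrow> nat \<Rightarrow> 'a::{finite,field}. bdm_step CARD('a) M (bdm_of M (bm_run M a \<tau>)))
    = map_pmf (\<lambda>a :: nat \<Rightarrow> nat \<Rightarrow> 'a. bdm_of M (bm_run M a (Suc \<tau>)))
      (pmf_of_set (processed_prefixes M (clock_col M (Suc \<tau>)) (clock_pos M (Suc \<tau>))))"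
proof -
  have t: "clock_pos M \<tau> = Suc M"
    using assms mod_less_divisor[of "Suc M" "\<tau> + M"] unfolding clock_pos_def by linarith
  have "bdm_step CARD('a) M (bdm_of M (bm_run M a \<tau>)) = return_pmf (bdm_of M (bm_run M a (Suc \<tau>)))"
    for a :: "nat \<Rightarrow> nat \<Rightarrow> 'a"
    unfolding bm_run.simps using bm_run_clock[of M a \<tau>] t by (intro bdm_step_wrap) simp
  then show ?thesis using assms t by (simp add: clock_Suc processed_prefixes_wrap map_pmf_def)
qed

lemma bdm_mu_eq_map:
  "bdm_mu CARD('a) M \<tau> = map_pmf (\<lambda>a::nat \<Rightarrow> nat \<Rightarrow> 'a::{finite,field}. bdm_of M (bm_run M a \<tau>))
      (pmf_of_set (processed_prefixes M (clock_col M \<tau>) (clock_pos M \<tau>)))"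
proof (induction \<tau>)
  case 0
  have "processed_prefixes M 0 (Suc M) = {\<lambda>_ _. (0::'a)}"
    by (auto simp: processed_prefixes_def processed_def)
  moreover have "bdm_of M (bm_init M :: 'a poly bm) = s_init M"
    by (auto simp: bdm_of_def s_init_def bm_init_def bm_len_def nth_map_upt intro!: nth_equalityI
        simp del: upt_Suc)
  ultimately show ?case by (simp add: clock_col_def clock_pos_def pmf_of_set_singleton)
next
  case (Suc \<tau>)
  then show ?case
    by (cases "clock_pos M \<tau> \<le> M") (simp_all add: bind_map_pmf bind_bdm_step_inner bind_bdm_step_wrap)
qed

lemma bdm_mu_block:
  "bdm_mu CARD('a) M (Suc M * n)
    = map_pmf (\<lambda>a::nat \<Rightarrow> nat \<Rightarrow> 'a::{finite,field}. bdm_of M (bm_run M a (Suc M * n)))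
        (pmf_of_set (prefixes M n))"
  using bdm_mu_eq_map[where 'a='a, of M "Suc M * n"] by (simp only: clock_block prefixes_eq_processed)

lemma bdm_of_in_S_set_iff:
  fixes a :: "nat \<Rightarrow> nat \<Rightarrow> 'a::field"
  assumes I: "bm_inv M a st" and pos: "bm_pos st = Suc M" and col: "bm_col st = n"
    and T0: "T0 = int (n mod Suc M)"
  shows "bdm_of M st \<in> S_set M T0 (M + 1) d \<longleftrightarrow> lc_dev M a n = d"
proof -
  have "lin_compl M a n = bm_ord st 0"
    using I pos col by (intro lin_compl_eq_order[of M a "bm_len st" "Suc M"]) (auto simp: bm_inv_def bm_len_def)
  then have "lc_dev M a n = int (bm_ord st 0) - int (n - n div Suc M)"
    unfolding lc_dev_def ceiling_mult_div by simp
  then show ?thesis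
    using bdm_of_in_states[OF I] by (auto simp: S_set_def bdm_of_def pos col T0 simp del: upt_Suc)
qed

lemma bdm_of_bm_run_in_S_set_iff:
  fixes a :: "nat \<Rightarrow> nat \<Rightarrow> 'a::field"
  assumes "T0 = int (n mod Suc M)"
  shows "bdm_of M (bm_run M a (Suc M * n)) \<in> S_set M T0 (M + 1) d \<longleftrightarrow> lc_dev M a n = d"
proof -
  have "bm_pos (bm_run M a (Suc M * n)) = Suc M" "bm_col (bm_run M a (Suc M * n)) = n"
    using bm_run_clock[of M a "Suc M * n"] clock_block[of M n] by simp_all
  then show ?thesis by (rule bdm_of_in_S_set_iff[OF bm_inv_run _ _ assms])
qed

lemma infsum_pmf_map_pmf_of_set:
  assumes "finite P" "P \<noteq> {}"
  shows "infsum (pmf (map_pmf G (pmf_of_set P))) S = card (P \<inter> G -` S) / card P"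
proof -
  have "infsum (pmf (map_pmf G (pmf_of_set P))) S = measure (map_pmf G (pmf_of_set P)) S"
    by (simp add: measure_pmf_conv_infsetsum infsetsum_infsum[OF pmf_abs_summable])
  also have "\<dots> = card (P \<inter> G -` S) / card P"
    using assms by (simp add: measure_pmf_of_set)
  finally show ?thesis .
qed

theorem mainTheorem13:
  fixes M n :: nat and d T0 :: int
  assumes "M \<ge> 1"
    and "0 \<le> T0" and "T0 \<le> int M" and "T0 mod int (M + 1) = int n mod int (M + 1)"
  shows "real (Ncount TYPE('a::{finite,field}) M n d)
         = real CARD('a) ^ (M * n)
           * infsum (\<lambda>s. pmf (bdm_mu CARD('a) M ((M + 1) * n)) s) (S_set M T0 (M + 1) d)"
proof -
  define P where "P = (prefixes M n :: (nat \<Rightarrow> nat \<Rightarrow> 'a) set)"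
  define G where "G a = bdm_of M (bm_run M a (Suc M * n))" for a :: "nat \<Rightarrow> nat \<Rightarrow> 'a"
  have P: "finite P" "P \<noteq> {}"
    using finite_processed_prefixes[where 'a='a, of M n "Suc M"]
    by (auto simp: P_def prefixes_eq_processed processed_prefixes_def)
  have "T0 = int (n mod Suc M)"
    using assms(2-4) by (simp add: zmod_int)
  then have "P \<inter> G -` S_set M T0 (M + 1) d = {a \<in> P. lc_dev M a n = d}"
    unfolding G_def using bdm_of_bm_run_in_S_set_iff by blast
  moreover have "bdm_mu CARD('a) M ((M + 1) * n) = map_pmf G (pmf_of_set P)"
    using bdm_mu_block[where 'a='a, of M n] by (simp add: G_def[abs_def] P_def)
  ultimately have "infsum (pmf (bdm_mu CARD('a) M ((M + 1) * n))) (S_set M T0 (M + 1) d)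
      = card {a \<in> P. lc_dev M a n = d} / card P"
    by (simp only: infsum_pmf_map_pmf_of_set[OF P])
  moreover have "card P = CARD('a) ^ (M * n)" by (simp add: P_def card_prefixes)
  ultimately show ?thesis by (simp add: Ncount_def P_def)
qed

end
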